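(* Let $N\in\mathbb N$ (with $N\ge2$ when $R_N=D_N$), $r>0$, $0<t_\ast<\infty$ and $t\in(0,t_\ast)$. With $q^{R_N}_t(\mathbf x)=\det_{1\le j,k\le N}[\overline{M^{R_N}_j(x_k,t_\ast-t)}]\det_{1\le\ell,m\le N}[M^{R_N}_\ell(x_m,t)]$, \[ \int_{\mathbb W_N^{[0,2\pi r)}}q^{A_N}_t(\mathbf x)\,d\mathbf x=\prod_{n=1}^N m^{A_N}_n(t_\ast),\qquad \int_{\mathbb W_N^{[0,\pi r]}}q^{R_N}_t(\mathbf x)\,d\mathbf x=\prod_{n=1}^N m^{R_N}_n(t_\ast) \] for $R_N\in\{B_N,B_N^\vee,C_N,C_N^\vee,BC_N,D_N\}$, where $\mathbb W_N^{[0,2\pi r)}=\{\mathbf x\in\mathbb R^N:0\le x_1<\dots<x_N<2\pi r\}$ and $\mathbb W_N^{[0,\pi r]}=\{\mathbf x\in\mathbb R^N:0\le x_1<\dots<x_N\le\pi r\}$.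
   Context: Jacobi theta functions: for $v\in\mathbb C$, $\tau\in\mathbb H=\{\Im\tau>0\}$, $z=e^{\pi iv}$, $q=e^{\pi i\tau}$: $\vartheta_1(v;\tau)=i\sum_{n\in\mathbb Z}(-1)^nq^{(n-1/2)^2}z^{2n-1}$, $\vartheta_2(v;\tau)=\sum_{n\in\mathbb Z}q^{(n-1/2)^2}z^{2n-1}$. For $\sigma\in\mathbb R$, $z\in\mathbb C$, $\tau\in\mathbb H$: $\Theta^A(\sigma,z,\tau)=e^{2\pi i\sigma z}\vartheta_2(\sigma\tau+z;\tau)$, $\Theta^B=e^{2\pi i\sigma z}\vartheta_1(\sigma\tau+z;\tau)-e^{-2\pi i\sigma z}\vartheta_1(\sigma\tau-z;\tau)$, $\Theta^C=e^{2\pi i\sigma z}\vartheta_2(\sigma\tau+z;\tau)-e^{-2\pi i\sigma z}\vartheta_2(\sigma\tau-z;\tau)$, $\Theta^D=e^{2\pi i\sigma z}\vartheta_2(\sigma\tau+z;\tau)+e^{-2\pi i\sigma z}\vartheta_2(\sigma\tau-z;\tau)$. Types $R_N\in\{A_N,B_N,B_N^\vee,C_N,C_N^\vee,BC_N,D_N\}$; $\sharp(R_N)=A$ for $A_N$, $B$ for $B_N,B_N^\vee$, $C$ for $C_N,C_N^\vee,BC_N$, $D$ for $D_N$; $J^{R_N}(j)=j-1/2$ for $A_N,C_N^\vee$, $j-1$ for $B_N,B_N^\vee,D_N$, $j$ for $C_N,BC_N$; $\mathcal N^{A_N}=N$, $\mathcal N^{B_N}=2N-1$, $\mathcal N^{B_N^\vee}=\mathcal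 N^{C_N^\vee}=2N$, $\mathcal N^{C_N}=2(N+1)$, $\mathcal N^{BC_N}=2N+1$, $\mathcal N^{D_N}=2(N-1)$. $\xi(x)=x/(2\pi r)$, $\tau(t)=it/(2\pi r^2)$; $M^{R_N}_j(x,t)=\Theta^{\sharp(R_N)}\big(J^{R_N}(j)/\mathcal N^{R_N},\mathcal N^{R_N}\xi(x),(\mathcal N^{R_N})^2\tau(t)\big)$ for $x\in\mathbb R$, $t>0$. Constants: for $R_N\in\{A_N,C_N,C_N^\vee,BC_N\}$, $m^{R_N}_j(t_\ast)=2\pi r\vartheta_2(\mathcal N^{R_N}J^{R_N}(j)\tau(t_\ast);(\mathcal N^{R_N})^2\tau(t_\ast))$; for $R_N\in\{B_N,B_N^\vee\}$, $m_1=4\pi r\vartheta_2(0;(\mathcal N^{R_N})^2\tau(t_\ast))$ and $m_j=2\pi r\vartheta_2(\mathcal N^{R_N}J^{R_N}(j)\tau(t_\ast);(\mathcal N^{R_N})^2\tau(t_\ast))$ for $j\ge2$; for $D_N$, $m_1=4\pi r\vartheta_2(0;(\mathcal N^{D_N})^2\tau(t_\ast))$, $m_j=2\pi r\vartheta_2(\mathcal N^{D_N}J^{D_N}(j)\tau(t_\ast);(\mathcal N^{D_N})^2\tau(t_\ast))$ for $2\le j\le N-1$, $m_N=4\pi r\vartheta_2(\mathcal N^{D_N}(N-1)\tau(t_\ast);(\mathcal N^{D_N})^2\tau(t_\ast))$. *)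

theory Defs
  imports "HOL-Analysis.Analysis" "Jordan_Normal_Form.Determinant"
begin

definition jtheta1 :: "complex \<Rightarrow> complex \<Rightarrow> complex" where
  "jtheta1 v tau = \<i> * (\<Sum>\<^sub>\<infinity> n::int. (-1) ^ nat \<bar>n\<bar> *
      exp (pi * \<i> * tau * (of_int n - 1/2)^2) * exp (pi * \<i> * v * (2 * of_int n - 1)))"

definition jtheta2 :: "complex \<Rightarrow> complex \<Rightarrow> complex" where
  "jtheta2 v tau = (\<Sum>\<^sub>\<infinity> n::int.
      exp (pi * \<i> * tau * (of_int n - 1/2)^2) * exp (pi * \<i> * v * (2 * of_int n - 1)))"

datatype theta_kind = ThA | ThB | ThC | ThD

definition Theta :: "theta_kind \<Rightarrow> real \<Rightarrow> complex \<Rightarrow> complex \<Rightarrow> complex" where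
  "Theta k \<sigma> z tau = (case k of
     ThA \<Rightarrow> exp (2 * pi * \<i> * \<sigma> * z) * jtheta2 (\<sigma> * tau + z) tau
   | ThB \<Rightarrow> exp (2 * pi * \<i> * \<sigma> * z) * jtheta1 (\<sigma> * tau + z) tau
            - exp (- 2 * pi * \<i> * \<sigma> * z) * jtheta1 (\<sigma> * tau - z) tau
   | ThC \<Rightarrow> exp (2 * pi * \<i> * \<sigma> * z) * jtheta2 (\<sigma> * tau + z) tau
            - exp (- 2 * pi * \<i> * \<sigma> * z) * jtheta2 (\<sigma> * tau - z) tau
   | ThD \<Rightarrow> exp (2 * pi * \<i> * \<sigma> * z) * jtheta2 (\<sigma> * tau + z) tau
            + exp (- 2 * pi * \<i> * \<sigma> * z) * jtheta2 (\<sigma> * tau - z) tau)"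

text \<open>A_N, B_N, B_N^vee, C_N, C_N^vee, BC_N, D_N\<close>
datatype rtype = RA | RB | RBv | RC | RCv | RBC | RD

fun sharp :: "rtype \<Rightarrow> theta_kind" where
  "sharp RA = ThA"
| "sharp RB = ThB" | "sharp RBv = ThB"
| "sharp RC = ThC" | "sharp RCv = ThC" | "sharp RBC = ThC"
| "sharp RD = ThD"

fun Jfun :: "rtype \<Rightarrow> nat \<Rightarrow> real" where
  "Jfun RA j = real j - 1/2"
| "Jfun RCv j = real j - 1/2"
| "Jfun RB j = real j - 1"
| "Jfun RBv j = real j - 1"
| "Jfun RD j = real j - 1"
| "Jfun RC j = real j"
| "Jfun RBC j = real j"

fun calN :: "rtype \<Rightarrow> nat \<Rightarrow> real" where
  "calN RA N = real N"
| "calN RB N = 2 * real N - 1"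
| "calN RBv N = 2 * real N"
| "calN RCv N = 2 * real N"
| "calN RC N = 2 * (real N + 1)"
| "calN RBC N = 2 * real N + 1"
| "calN RD N = 2 * (real N - 1)"

definition xi :: "real \<Rightarrow> real \<Rightarrow> real" where
  "xi r x = x / (2 * pi * r)"

definition tauf :: "real \<Rightarrow> real \<Rightarrow> complex" where
  "tauf r t = \<i> * t / (2 * pi * r^2)"

definition Mfun :: "rtype \<Rightarrow> nat \<Rightarrow> real \<Rightarrow> nat \<Rightarrow> real \<Rightarrow> real \<Rightarrow> complex" where
  "Mfun R N r j x t = Theta (sharp R) (Jfun R j / calN R N)
      (of_real (calN R N * xi r x)) (of_real ((calN R N)^2) * tauf r t)"

definition mconst :: "rtype \<Rightarrow> nat \<Rightarrow> real \<Rightarrow> nat \<Rightarrow> real \<Rightarrow> complex" where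
  "mconst R N r j ts =
     (let NN = calN R N; tt = of_real (NN^2) * tauf r ts in
      if (R \<in> {RB, RBv, RD} \<and> j = 1) then 4 * pi * r * jtheta2 0 tt
      else if (R = RD \<and> j = N) then 4 * pi * r * jtheta2 (of_real (NN * (real N - 1)) * tauf r ts) tt
      else 2 * pi * r * jtheta2 (of_real (NN * Jfun R j) * tauf r ts) tt)"

text \<open>Points x in R^N are functions nat => real, coordinates x 0, ..., x (N-1)
  standing for x_1, ..., x_N.\<close>
definition weyl_A :: "nat \<Rightarrow> real \<Rightarrow> (nat \<Rightarrow> real) set" where
  "weyl_A N r = {x. 0 \<le> x 0 \<and> (\<forall>k. Suc k < N \<longrightarrow> x k < x (Suc k)) \<and> x (N - 1) < 2 * pi * r}"

definition weyl_half :: "nat \<Rightarrow> real \<Rightarrow> (nat \<Rightarrow> real) set" where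
  "weyl_half N r = {x. 0 \<le> x 0 \<and> (\<forall>k. Suc k < N \<longrightarrow> x k < x (Suc k)) \<and> x (N - 1) \<le> pi * r}"

definition qdens :: "rtype \<Rightarrow> nat \<Rightarrow> real \<Rightarrow> real \<Rightarrow> real \<Rightarrow> (nat \<Rightarrow> real) \<Rightarrow> complex" where
  "qdens R N r ts t x =
     det (mat N N (\<lambda>(j, k). cnj (Mfun R N r (Suc j) (x k) (ts - t))))
   * det (mat N N (\<lambda>(l, m). Mfun R N r (Suc l) (x m) t))"

end

(*
  Each M_j(., t) is an absolutely convergent Fourier series in x whose n-th mode has frequency
  freq/r and the Gaussian weight exp(-t (freq^2 - J^2) / (2 r^2)). For a fixed type, the
  frequencies belonging to different j lie in different residue classes modulo the period N(R),
  so the M_j are orthogonal on [0, 2 pi r] (exponentials, type A), resp. on [0, pi r] (sines and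
  cosines); there the reflection freq |-> -freq also pairs modes, which matters only for the
  extreme shifts J = 0 and 2 J = N(R) and doubles the norm. On the diagonal the weights at times
  ts - t and t multiply to the weights at time ts, and these sum to the theta value in m_j(ts).
  Andreief's identity, proved by symmetrising over the cube, turns the integral over the Weyl
  chamber of the product of the two determinants into the determinant of this diagonal Gram matrix.
*)

theory Submission
  imports Defs
begin

section \<open>Symmetrisation over the Weyl chamber\<close>

definition chamber :: "nat \<Rightarrow> real set \<Rightarrow> (nat \<Rightarrow> real) set" where
  "chamber N S = {x. (\<forall>k<N. x k \<in> S) \<and> (\<forall>k. Suc k < N \<longrightarrow> x k < x (Suc k))}"

definition permute_coords :: "nat \<Rightarrow> (nat \<Rightarrow> nat) \<Rightarrow> (nat \<Rightarrow> 'a) \<Rightarrow> nat \<Rightarrow> 'a" where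
  "permute_coords N p x = (\<lambda>i\<in>{..<N}. x (p i))"

abbreviation lborelN :: "nat \<Rightarrow> (nat \<Rightarrow> real) measure" where
  "lborelN N \<equiv> PiM {..<N} (\<lambda>_. lborel)"

lemma strict_chain_less:
  fixes x :: "nat \<Rightarrow> 'a::order"
  assumes "\<And>k. Suc k < N \<Longrightarrow> x k < x (Suc k)" "i < j" "j < N"
  shows "x i < x j"
proof (rule lift_Suc_mono_less_ivl[of "{k. Suc k < N}"])
  show "{i..<j} \<subseteq> {k. Suc k < N}"
    using assms(3) by auto
qed (use assms in auto)

lemma increasing_chain_bounds:
  fixes x :: "nat \<Rightarrow> real"
  assumes "\<And>k. Suc k < N \<Longrightarrow> x k < x (Suc k)" "k < N"
  shows "x 0 \<le> x k" "x k \<le> x (N - 1)"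
  using strict_chain_less[of N x 0 k] strict_chain_less[of N x k "N - 1"] assms
  by (cases "k = 0"; cases "k = N - 1"; force)+

lemma chamber_measurable [measurable]:
  assumes [measurable]: "S \<in> sets borel"
  shows "chamber N S \<inter> space (lborelN N) \<in> sets (lborelN N)"
proof -
  have "chamber N S \<inter> space (lborelN N) =
      (\<Inter>k<N. {x \<in> space (lborelN N). x k \<in> S}) \<inter>
      (\<Inter>k<N - 1. {x \<in> space (lborelN N). x k < x (Suc k)}) \<inter> space (lborelN N)"
    by (auto simp: chamber_def)
  also have "\<dots> \<in> sets (lborelN N)"
    by measurable
  finally show ?thesis .
qed

lemma sorting_permutation_exists:
  fixes x :: "nat \<Rightarrow> 'a::linorder"
  assumes inj: "inj_on x {..<N}"
  obtains p where "p permutes {..<N}" "\<And>k. Suc k < N \<Longrightarrow> x (p k) < x (p (Suc k))"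
proof -
  define xs where "xs = sorted_list_of_set (x ` {..<N})"
  have len: "length xs = N" and set_xs: "set xs = x ` {..<N}" and sorted: "sorted_wrt (<) xs"
    using inj by (simp_all add: xs_def card_image strict_sorted_list_of_set)
  define p where "p k = (if k < N then the_inv_into {..<N} x (xs ! k) else k)" for k
  have xs_in: "k < N \<Longrightarrow> xs ! k \<in> x ` {..<N}" for k
    using len set_xs nth_mem by blast
  have p_lt: "k < N \<Longrightarrow> p k < N" for k
    using the_inv_into_into[OF inj xs_in] by (auto simp: p_def)
  have x_p: "k < N \<Longrightarrow> x (p k) = xs ! k" for k
    using f_the_inv_into_f[OF inj xs_in] by (auto simp: p_def)
  have "inj_on p {..<N}"
  proof (rule inj_onI)
    fix a b assume ab: "a \<in> {..<N}" "b \<in> {..<N}" "p a = p b"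
    then have "xs ! a = xs ! b"
      using x_p by (metis lessThan_iff)
    moreover have "distinct xs"
      using sorted by (simp add: strict_sorted_iff)
    ultimately show "a = b"
      using ab len by (simp add: nth_eq_iff_index_eq)
  qed
  moreover have "p ` {..<N} \<subseteq> {..<N}"
    using p_lt by auto
  ultimately have "bij_betw p {..<N} {..<N}"
    using endo_inj_surj[of "{..<N}" p] by (simp add: bij_betw_def)
  then have "p permutes {..<N}"
    by (rule bij_imp_permutes) (simp add: p_def)
  moreover have "x (p k) < x (p (Suc k))" if "Suc k < N" for k
    using x_p sorted len that by (auto intro: sorted_wrt_nth_less)
  ultimately show ?thesis using that by blast
qed

lemma sorting_permutation_unique:
  fixes x :: "nat \<Rightarrow> 'a::linorder"
  assumes inj: "inj_on x {..<N}"
    and p: "p permutes {..<N}" "\<And>k. Suc k < N \<Longrightarrow> x (p k) < x (p (Suc k))"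
    and q: "q permutes {..<N}" "\<And>k. Suc k < N \<Longrightarrow> x (q k) < x (q (Suc k))"
  shows "p = q"
proof -
  have sorted_list: "sorted_wrt (<) (map (x \<circ> p') [0..<N]) \<and> set (map (x \<circ> p') [0..<N]) = x ` {..<N}"
    if "p' permutes {..<N}" "\<And>k. Suc k < N \<Longrightarrow> x (p' k) < x (p' (Suc k))" for p'
  proof
    show "sorted_wrt (<) (map (x \<circ> p') [0..<N])"
      using strict_chain_less[of N "x \<circ> p'"] that(2) by (auto simp: sorted_wrt_iff_nth_less)
    have "(x \<circ> p') ` {..<N} = x ` {..<N}"
      using permutes_image[OF that(1)] by (metis image_comp)
    then show "set (map (x \<circ> p') [0..<N]) = x ` {..<N}"
      by (simp add: atLeast0LessThan)
  qed
  have maps_eq: "map (x \<circ> p) [0..<N] = map (x \<circ> q) [0..<N]"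
    using sorted_list[OF p] sorted_list[OF q]
    by (intro sorted_distinct_set_unique) (auto simp: strict_sorted_iff)
  then have "x (p k) = x (q k)" if "k < N" for k
    using arg_cong[OF maps_eq, of "\<lambda>l. l ! k"] that by simp
  then have "p k = q k" if "k < N" for k
    using that inj permutes_in_image[OF p(1)] permutes_in_image[OF q(1)] by (meson inj_onD lessThan_iff)
  moreover have "p k = q k" if "k \<ge> N" for k
    using that permutes_not_in[OF p(1)] permutes_not_in[OF q(1)] by simp
  ultimately show ?thesis by (metis linorder_not_le ext)
qed

lemma permute_coords_in_chamber_iff:
  fixes x :: "nat \<Rightarrow> real"
  assumes inj: "inj_on x {..<N}" and sort: "s permutes {..<N}" "\<And>k. Suc k < N \<Longrightarrow> x (s k) < x (s (Suc k))"
    and p: "p permutes {..<N}"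
  shows "permute_coords N p x \<in> chamber N S \<longleftrightarrow> p = s \<and> (\<forall>k<N. x k \<in> S)"
proof -
  have coords: "(\<forall>k<N. x (p k) \<in> S) \<longleftrightarrow> (\<forall>k<N. x k \<in> S)"
    using p by (metis lessThan_iff permutes_in_image permutes_inverses(1) permutes_inv)
  show ?thesis
    using coords sorting_permutation_unique[OF inj p _ sort] sort(2)
    by (auto simp: chamber_def permute_coords_def)
qed

lemma sum_indicator_chamber_permute_coords:
  fixes x :: "nat \<Rightarrow> real"
  assumes "inj_on x {..<N}"
  shows "(\<Sum>p | p permutes {..<N}. indicator (chamber N S) (permute_coords N p x) :: real)
       = indicator {x. \<forall>k<N. x k \<in> S} x"
proof -
  obtain s where s: "s permutes {..<N}" "\<And>k. Suc k < N \<Longrightarrow> x (s k) < x (s (Suc k))"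
    using sorting_permutation_exists[OF assms] by blast
  have "(\<Sum>p | p permutes {..<N}. indicator (chamber N S) (permute_coords N p x) :: real)
      = (\<Sum>p | p permutes {..<N}. if p = s then indicator {x. \<forall>k<N. x k \<in> S} x else 0)"
    using permute_coords_in_chamber_iff[OF assms s] by (intro sum.cong) (auto simp: indicator_def)
  also have "\<dots> = indicator {x. \<forall>k<N. x k \<in> S} x"
    using s(1) by (simp add: finite_permutations)
  finally show ?thesis .
qed

lemma permute_coords_measurable [measurable]:
  assumes "p permutes {..<N}"
  shows "permute_coords N p \<in> lborelN N \<rightarrow>\<^sub>M lborelN N"
  unfolding permute_coords_def
  by (rule measurable_restrict)
     (use permutes_in_image[OF assms] in \<open>auto intro!: measurable_component_singleton\<close>)

lemma distr_permute_coords_lborelN: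
  assumes p: "p permutes {..<N}"
  shows "distr (lborelN N) (lborelN N) (permute_coords N p) = lborelN N"
proof -
  interpret product_sigma_finite "\<lambda>_::nat. lborel::real measure" by standard
  let ?q = "Hilbert_Choice.inv p"
  have q: "?q permutes {..<N}"
    using permutes_inv[OF p] .
  show ?thesis
  proof (rule PiM_eqI)
    fix A assume A: "\<And>i. i \<in> {..<N} \<Longrightarrow> A i \<in> sets (lborel::real measure)"
    have "permute_coords N p -` Pi\<^sub>E {..<N} A \<inter> space (lborelN N) = Pi\<^sub>E {..<N} (\<lambda>j. A (?q j))"
    proof (intro equalityI subsetI)
      fix x assume x: "x \<in> permute_coords N p -` Pi\<^sub>E {..<N} A \<inter> space (lborelN N)"
      have "x j \<in> A (?q j)" if "j < N" for j
        using x permutes_in_image[OF q, of j] permutes_inverses(1)[OF p, of j] that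
        by (force simp: permute_coords_def PiE_iff)
      then show "x \<in> Pi\<^sub>E {..<N} (\<lambda>j. A (?q j))"
        using x by (auto simp: space_PiM PiE_iff)
    next
      fix x assume x: "x \<in> Pi\<^sub>E {..<N} (\<lambda>j. A (?q j))"
      have "x (p i) \<in> A i" if "i < N" for i
        using x permutes_in_image[OF p, of i] permutes_inverses(2)[OF p, of i] that
        by (force simp: PiE_iff)
      then show "x \<in> permute_coords N p -` Pi\<^sub>E {..<N} A \<inter> space (lborelN N)"
        using x by (auto simp: space_PiM PiE_iff permute_coords_def)
    qed
    then have "emeasure (distr (lborelN N) (lborelN N) (permute_coords N p)) (Pi\<^sub>E {..<N} A)
        = emeasure (lborelN N) (Pi\<^sub>E {..<N} (\<lambda>j. A (?q j)))"
      using A by (subst emeasure_distr[OF permute_coords_measurable[OF p]]) (auto intro!: sets_PiM_I_finite)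
    also have "\<dots> = (\<Prod>j<N. emeasure lborel (A (?q j)))"
      using A permutes_in_image[OF q] by (subst emeasure_PiM) auto
    also have "\<dots> = (\<Prod>i<N. emeasure lborel (A i))"
      using prod.permute[OF q, of "\<lambda>i. emeasure lborel (A i)"] by (simp add: comp_def)
    finally show "emeasure (distr (lborelN N) (lborelN N) (permute_coords N p)) (Pi\<^sub>E {..<N} A)
        = (\<Prod>i<N. emeasure lborel (A i))" .
  qed auto
qed

lemma integral_permute_coords:
  fixes f :: "(nat \<Rightarrow> real) \<Rightarrow> 'b::{banach, second_countable_topology}"
  assumes p: "p permutes {..<N}" and f: "integrable (lborelN N) f"
  shows "integrable (lborelN N) (\<lambda>x. f (permute_coords N p x))"
    and "(\<integral>x. f (permute_coords N p x) \<partial>lborelN N) = (\<integral>x. f x \<partial>lborelN N)"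
proof -
  have [measurable]: "f \<in> borel_measurable (lborelN N)"
    using f by auto
  show "integrable (lborelN N) (\<lambda>x. f (permute_coords N p x))"
    using f integrable_distr_eq[of "permute_coords N p" "lborelN N" "lborelN N" f]
    by (simp add: distr_permute_coords_lborelN[OF p] permute_coords_measurable[OF p])
  show "(\<integral>x. f (permute_coords N p x) \<partial>lborelN N) = (\<integral>x. f x \<partial>lborelN N)"
    using integral_distr[of "permute_coords N p" "lborelN N" "lborelN N" f]
    by (simp add: distr_permute_coords_lborelN[OF p] permute_coords_measurable[OF p])
qed

lemma set_integral_cube_eq_fact_chamber:
  fixes P :: "(nat \<Rightarrow> real) \<Rightarrow> 'b::{banach, second_countable_topology}"
  assumes S [measurable]: "S \<in> sets borel"
    and int: "set_integrable (lborelN N) {x. \<forall>k<N. x k \<in> S} P"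
    and sym: "\<And>p x. p permutes {..<N} \<Longrightarrow> P (permute_coords N p x) = P x"
    and diag: "\<And>x. \<not> inj_on x {..<N} \<Longrightarrow> P x = 0"
  shows "(LINT x : {x. \<forall>k<N. x k \<in> S} | lborelN N. P x) = fact N *\<^sub>R (LINT x : chamber N S | lborelN N. P x)"
proof -
  let ?Perm = "{p. p permutes {..<N}}"
  define h where "h x = indicator (chamber N S) x *\<^sub>R P x" for x
  have "integrable (lborelN N) (\<lambda>x. indicator (chamber N S \<inter> space (lborelN N)) x *\<^sub>R
      (indicator {x. \<forall>k<N. x k \<in> S} x *\<^sub>R P x))"
    using integrable_mult_indicator[OF chamber_measurable[OF S] int[unfolded set_integrable_def]] .
  moreover have "integrable (lborelN N) h \<longleftrightarrow> integrable (lborelN N) (\<lambda>x.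
      indicator (chamber N S \<inter> space (lborelN N)) x *\<^sub>R (indicator {x. \<forall>k<N. x k \<in> S} x *\<^sub>R P x))"
    by (intro Bochner_Integration.integrable_cong) (auto simp: h_def chamber_def indicator_def)
  ultimately have int_h: "integrable (lborelN N) h"
    by simp
  have cube_sum: "indicator {x. \<forall>k<N. x k \<in> S} x *\<^sub>R P x = (\<Sum>p\<in>?Perm. h (permute_coords N p x))" for x
  proof (cases "inj_on x {..<N}")
    case True
    have "(\<Sum>p\<in>?Perm. h (permute_coords N p x))
        = (\<Sum>p\<in>?Perm. indicator (chamber N S) (permute_coords N p x) :: real) *\<^sub>R P x"
      by (simp add: h_def sym scaleR_sum_left)
    then show ?thesis
      by (simp add: sum_indicator_chamber_permute_coords[OF True])
  qed (simp add: h_def sym diag)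
  have "(LINT x : {x. \<forall>k<N. x k \<in> S} | lborelN N. P x) = (\<Sum>p\<in>?Perm. \<integral>x. h (permute_coords N p x) \<partial>lborelN N)"
    unfolding set_lebesgue_integral_def cube_sum
    using integral_permute_coords(1)[OF _ int_h] by (intro Bochner_Integration.integral_sum) auto
  also have "\<dots> = (\<Sum>p\<in>?Perm. \<integral>x. h x \<partial>lborelN N)"
    using integral_permute_coords(2)[OF _ int_h] by (intro sum.cong) auto
  also have "\<dots> = fact N *\<^sub>R (LINT x : chamber N S | lborelN N. P x)"
    by (simp add: card_permutations sum_constant_scaleR h_def set_lebesgue_integral_def)
  finally show ?thesis .
qed

section \<open>Andreief's identity\<close>

lemma det_mat_swap: "det (mat N N (\<lambda>(i, j). F j i)) = det (mat N N (\<lambda>(i, j). F i j))"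
proof -
  have "mat N N (\<lambda>(i, j). F j i) = transpose_mat (mat N N (\<lambda>(i, j). F i j))"
    by (rule eq_matI) auto
  then show ?thesis
    by (simp add: det_transpose[of _ N])
qed

lemma det_diagonal_mat:
  fixes G :: "nat \<Rightarrow> nat \<Rightarrow> 'a::comm_ring_1"
  assumes "\<And>i j. i < N \<Longrightarrow> j < N \<Longrightarrow> i \<noteq> j \<Longrightarrow> G i j = 0"
  shows "det (mat N N (\<lambda>(i, j). G i j)) = (\<Prod>i<N. G i i)"
proof -
  have "det (mat N N (\<lambda>(i, j). G i j)) = prod_list (diag_mat (mat N N (\<lambda>(i, j). G i j)))"
    by (rule det_upper_triangular) (use assms in \<open>auto intro!: upper_triangularI\<close>)
  then show ?thesis
    by (simp add: prod_list_diag_prod atLeast0LessThan)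
qed

definition slater_det :: "nat \<Rightarrow> (nat \<Rightarrow> 'a \<Rightarrow> 'b::comm_ring_1) \<Rightarrow> (nat \<Rightarrow> 'a) \<Rightarrow> 'b" where
  "slater_det N f x = det (mat N N (\<lambda>(k, j). f j (x k)))"

lemma slater_det_leibniz:
  "slater_det N f x = (\<Sum>p | p permutes {..<N}. signof p * (\<Prod>k<N. f (p k) (x k)))"
  unfolding slater_det_def
  by (subst det_def'[of _ N]) (auto simp: atLeast0LessThan permutes_in_image intro!: sum.cong prod.cong)

lemma slater_det_permute_coords:
  assumes "p permutes {..<N}"
  shows "slater_det N f (permute_coords N p x) = signof p * slater_det N f x"
proof -
  let ?A = "mat N N (\<lambda>(k, j). f j (x k))"
  have "mat N N (\<lambda>(k, j). f j (permute_coords N p x k)) = mat N N (\<lambda>(i, j). ?A $$ (p i, j))"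
    using permutes_in_image[OF assms] by (intro eq_matI) (auto simp: permute_coords_def)
  then show ?thesis
    unfolding slater_det_def using assms by (simp add: det_permute_rows atLeast0LessThan)
qed

lemma slater_det_eq_0_if_not_inj:
  assumes "\<not> inj_on x {..<N}"
  shows "slater_det N f x = 0"
proof -
  obtain k k' where "k < N" "k' < N" "k \<noteq> k'" "x k = x k'"
    using assms by (auto simp: inj_on_def)
  then show ?thesis
    unfolding slater_det_def by (intro det_identical_rows[of _ N k k']) (auto intro!: eq_vecI)
qed

lemma sum_signed_permutation_pairs:
  fixes G :: "nat \<Rightarrow> nat \<Rightarrow> 'a::comm_ring_1"
  shows "(\<Sum>\<sigma> | \<sigma> permutes {..<N}. \<Sum>\<pi> | \<pi> permutes {..<N}.
            signof \<sigma> * signof \<pi> * (\<Prod>k<N. G (\<sigma> k) (\<pi> k)))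
         = of_nat (fact N) * det (mat N N (\<lambda>(i, j). G i j))"
proof -
  let ?Perm = "{p. p permutes {..<N}}"
  have inner: "(\<Sum>\<pi>\<in>?Perm. signof \<sigma> * signof \<pi> * (\<Prod>k<N. G (\<sigma> k) (\<pi> k))) = det (mat N N (\<lambda>(i, j). G i j))"
    if \<sigma>: "\<sigma> permutes {..<N}" for \<sigma>
  proof -
    have shifted: "signof \<sigma> * signof (\<tau> \<circ> \<sigma>) * (\<Prod>k<N. G (\<sigma> k) ((\<tau> \<circ> \<sigma>) k))
        = signof \<tau> * (\<Prod>j<N. G j (\<tau> j))" if \<tau>: "\<tau> permutes {..<N}" for \<tau>
    proof -
      have "sign (\<tau> \<circ> \<sigma>) = sign \<tau> * sign \<sigma>"
        using sign_compose[OF permutes_imp_permutation[OF _ \<tau>] permutes_imp_permutation[OF _ \<sigma>]]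
        by simp
      then have "sign \<sigma> * sign (\<tau> \<circ> \<sigma>) = sign \<tau>"
        by (simp add: sign_def)
      then have "signof \<sigma> * signof (\<tau> \<circ> \<sigma>) = (signof \<tau> :: 'a)"
        by (metis of_int_mult)
      moreover have "(\<Prod>k<N. G (\<sigma> k) (\<tau> (\<sigma> k))) = (\<Prod>j<N. G j (\<tau> j))"
        using prod.permute[OF \<sigma>, of "\<lambda>j. G j (\<tau> j)"] by (simp add: comp_def)
      ultimately show ?thesis
        by simp
    qed
    have "(\<Sum>\<pi>\<in>?Perm. signof \<sigma> * signof \<pi> * (\<Prod>k<N. G (\<sigma> k) (\<pi> k)))
        = (\<Sum>\<tau>\<in>?Perm. signof \<sigma> * signof (\<tau> \<circ> \<sigma>) * (\<Prod>k<N. G (\<sigma> k) ((\<tau> \<circ> \<sigma>) k)))"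
      by (rule sum_permutations_compose_right[OF \<sigma>])
    also have "\<dots> = (\<Sum>\<tau>\<in>?Perm. signof \<tau> * (\<Prod>j<N. G j (\<tau> j)))"
      using shifted by (intro sum.cong) auto
    also have "\<dots> = det (mat N N (\<lambda>(i, j). G i j))"
      by (subst det_def'[of _ N]) (auto simp: atLeast0LessThan permutes_in_image intro!: sum.cong prod.cong)
    finally show ?thesis .
  qed
  then show ?thesis
    by (simp add: card_permutations)
qed

lemma set_integral_cube_slater_det_mult:
  fixes f g :: "nat \<Rightarrow> real \<Rightarrow> 'b::{real_normed_field, banach, second_countable_topology}"
  assumes int: "\<And>a b. a < N \<Longrightarrow> b < N \<Longrightarrow> set_integrable lborel S (\<lambda>y. f a y * g b y)"
  shows "set_integrable (lborelN N) {x. \<forall>k<N. x k \<in> S} (\<lambda>x. slater_det N f x * slater_det N g x)"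
    and "(LINT x : {x. \<forall>k<N. x k \<in> S} | lborelN N. slater_det N f x * slater_det N g x)
       = of_nat (fact N) * det (mat N N (\<lambda>(a, b). LINT y : S | lborel. f a y * g b y))"
proof -
  interpret product_sigma_finite "\<lambda>_::nat. lborel::real measure" by standard
  let ?Perm = "{p. p permutes {..<N}}"
  let ?C = "{x. \<forall>k<N. x k \<in> S}"
  define h where "h a b y = indicator S y *\<^sub>R (f a y * g b y)" for a b y
  define G where "G a b = (LINT y : S | lborel. f a y * g b y)" for a b
  have expand: "indicator ?C x *\<^sub>R (slater_det N f x * slater_det N g x)
      = (\<Sum>\<sigma>\<in>?Perm. \<Sum>\<pi>\<in>?Perm. signof \<sigma> * signof \<pi> * (\<Prod>k<N. h (\<sigma> k) (\<pi> k) (x k)))" for x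
  proof (cases "x \<in> ?C")
    case True
    then have "(\<Prod>k<N. h (\<sigma> k) (\<pi> k) (x k)) = (\<Prod>k<N. f (\<sigma> k) (x k)) * (\<Prod>k<N. g (\<pi> k) (x k))" for \<sigma> \<pi>
      by (auto simp: h_def prod.distrib[symmetric] intro!: prod.cong)
    then show ?thesis
      using True by (simp add: slater_det_leibniz sum_product mult_ac)
  next
    case False
    then obtain k where "k < N" "x k \<notin> S" by auto
    then have vanish: "(\<Prod>k<N. h (\<sigma> k) (\<pi> k) (x k)) = 0" for \<sigma> \<pi>
      by (intro prod_zero bexI[of _ k]) (auto simp: h_def)
    show ?thesis
      using False by (simp only: vanish) simp
  qed
  have int_prod: "integrable (lborelN N) (\<lambda>x. \<Prod>k<N. h (\<sigma> k) (\<pi> k) (x k))"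
    if "\<sigma> \<in> ?Perm" "\<pi> \<in> ?Perm" for \<sigma> \<pi>
  proof -
    have "\<sigma> k < N" "\<pi> k < N" if "k < N" for k
      using that permutes_in_image[of \<sigma> "{..<N}" k] permutes_in_image[of \<pi> "{..<N}" k] \<open>\<sigma> \<in> ?Perm\<close> \<open>\<pi> \<in> ?Perm\<close>
      by auto
    then show ?thesis
      using int unfolding h_def set_integrable_def by (intro product_integrable_prod) auto
  qed
  show "set_integrable (lborelN N) ?C (\<lambda>x. slater_det N f x * slater_det N g x)"
    unfolding set_integrable_def expand using int_prod
    by (intro Bochner_Integration.integrable_sum integrable_mult_right) auto
  have "(LINT x : ?C | lborelN N. slater_det N f x * slater_det N g x)
      = (\<Sum>\<sigma>\<in>?Perm. \<Sum>\<pi>\<in>?Perm. signof \<sigma> * signof \<pi> * (\<integral>x. (\<Prod>k<N. h (\<sigma> k) (\<pi> k) (x k)) \<partial>lborelN N))"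
    unfolding set_lebesgue_integral_def expand
    by (subst Bochner_Integration.integral_sum,
        force intro!: Bochner_Integration.integrable_sum integrable_mult_right int_prod)
       (intro sum.cong refl, subst Bochner_Integration.integral_sum,
        force intro!: integrable_mult_right int_prod, simp)
  also have "\<dots> = (\<Sum>\<sigma>\<in>?Perm. \<Sum>\<pi>\<in>?Perm. signof \<sigma> * signof \<pi> * (\<Prod>k<N. G (\<sigma> k) (\<pi> k)))"
  proof (intro sum.cong refl arg_cong2[where f = "(*)"])
    fix \<sigma> \<pi> assume "\<sigma> \<in> ?Perm" "\<pi> \<in> ?Perm"
    then have "\<sigma> k < N" "\<pi> k < N" if "k < N" for k
      using that permutes_in_image[of \<sigma> "{..<N}" k] permutes_in_image[of \<pi> "{..<N}" k] by auto
    then show "(\<integral>x. (\<Prod>k<N. h (\<sigma> k) (\<pi> k) (x k)) \<partial>lborelN N) = (\<Prod>k<N. G (\<sigma> k) (\<pi> k))"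
      using int unfolding G_def h_def set_lebesgue_integral_def set_integrable_def
      by (intro product_integral_prod) auto
  qed
  also have "\<dots> = of_nat (fact N) * det (mat N N (\<lambda>(a, b). G a b))"
    by (rule sum_signed_permutation_pairs)
  finally show "(LINT x : ?C | lborelN N. slater_det N f x * slater_det N g x)
      = of_nat (fact N) * det (mat N N (\<lambda>(a, b). LINT y : S | lborel. f a y * g b y))"
    by (simp add: G_def)
qed

lemma andreief_identity:
  fixes f g :: "nat \<Rightarrow> real \<Rightarrow> 'b::{real_normed_field, banach, second_countable_topology}"
  assumes S: "S \<in> sets borel"
    and int: "\<And>a b. a < N \<Longrightarrow> b < N \<Longrightarrow> set_integrable lborel S (\<lambda>y. f a y * g b y)"
  shows "(LINT x : chamber N S | lborelN N. slater_det N f x * slater_det N g x)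
       = det (mat N N (\<lambda>(a, b). LINT y : S | lborel. f a y * g b y))"
proof -
  note cube = set_integral_cube_slater_det_mult[OF int]
  have "fact N *\<^sub>R (LINT x : chamber N S | lborelN N. slater_det N f x * slater_det N g x)
      = (LINT x : {x. \<forall>k<N. x k \<in> S} | lborelN N. slater_det N f x * slater_det N g x)"
    by (rule set_integral_cube_eq_fact_chamber[OF S cube(1), symmetric])
       (simp_all add: slater_det_permute_coords slater_det_eq_0_if_not_inj mult_ac sign_def)
  then show ?thesis
    using cube(2) by (simp add: scaleR_conv_of_real)
qed



section \<open>Theta functions as Fourier series\<close>

lemma summable_on_int_if_halves:
  fixes f :: "int \<Rightarrow> 'a::topological_comm_monoid_add"
  assumes "(\<lambda>n. f (int n)) summable_on UNIV" "(\<lambda>n. f (- int n - 1)) summable_on UNIV"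
  shows "f summable_on UNIV"
proof -
  have "x \<in> range int \<union> range (\<lambda>n. - int n - 1)" for x :: int
  proof (cases "x \<ge> 0")
    case True
    then have "x = int (nat x)" by simp
    then show ?thesis by blast
  next
    case False
    then have "x = - int (nat (- x - 1)) - 1" by simp
    then show ?thesis by blast
  qed
  then have UNIV_int: "(UNIV::int set) = range int \<union> range (\<lambda>n. - int n - 1)"
    by blast
  have "f summable_on range int"
    using assms(1) by (subst summable_on_reindex) (auto simp: comp_def)
  moreover have "f summable_on range (\<lambda>n. - int n - 1)"
    using assms(2) by (subst summable_on_reindex) (auto simp: comp_def inj_on_def)
  moreover have "range int \<inter> range (\<lambda>n. - int n - 1) = {}"
    by auto
  ultimately show ?thesis
    unfolding UNIV_int by (rule summable_on_Un_disjoint)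
qed

lemma summable_on_exp_neg_abs_int: "(\<lambda>n::int. exp (- \<bar>real_of_int n\<bar>)) summable_on UNIV"
proof (rule summable_on_int_if_halves)
  have geometric: "(\<lambda>n. exp (- 1::real) ^ n) summable_on UNIV"
    using summable_geometric[of "exp (-1::real)"]
    by (intro norm_summable_imp_summable_on) (simp add: norm_power)
  have "exp (- \<bar>real_of_int (int n)\<bar>) = exp (- 1::real) ^ n" for n
    by (simp add: exp_of_nat_mult[symmetric])
  then show "(\<lambda>n. exp (- \<bar>real_of_int (int n)\<bar>)) summable_on UNIV"
    using geometric by simp
  have "exp (- \<bar>real_of_int (- int n - 1)\<bar>) = exp (- 1::real) * exp (- 1::real) ^ n" for n
    by (simp add: exp_of_nat_mult[symmetric] exp_add[symmetric] algebra_simps)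
  then show "(\<lambda>n. exp (- \<bar>real_of_int (- int n - 1)\<bar>)) summable_on UNIV"
    using summable_on_cmult_right[OF geometric, of "exp (-1)"] by simp
qed

lemma neg_quadratic_le_linear_decay:
  fixes a \<alpha> \<beta> x :: real
  assumes a: "a > 0" and \<alpha>: "\<alpha> \<noteq> 0"
  shows "- a * (\<alpha> * x + \<beta>)\<^sup>2 \<le> (1 / \<bar>\<alpha>\<bar>)\<^sup>2 / (4 * a) + \<bar>\<beta>\<bar> / \<bar>\<alpha>\<bar> - \<bar>x\<bar>"
proof -
  define y where "y = \<alpha> * x + \<beta>"
  define B where "B = 1 / \<bar>\<alpha>\<bar>"
  have B: "B > 0"
    using \<alpha> by (simp add: B_def)
  have "x = (y - \<beta>) / \<alpha>"
    using \<alpha> by (simp add: y_def field_simps)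
  then have "\<bar>x\<bar> = \<bar>y - \<beta>\<bar> * B"
    by (simp add: B_def abs_mult abs_inverse divide_inverse)
  also have "\<dots> \<le> (\<bar>y\<bar> + \<bar>\<beta>\<bar>) * B"
    using B by (intro mult_right_mono) auto
  finally have x: "\<bar>x\<bar> \<le> \<bar>y\<bar> * B + \<bar>\<beta>\<bar> * B"
    by (simp add: algebra_simps)
  have "0 \<le> (2 * a * \<bar>y\<bar> - B)\<^sup>2"
    by simp
  then have "- a * y\<^sup>2 + B * \<bar>y\<bar> \<le> B\<^sup>2 / (4 * a)"
    using a by (simp add: power2_eq_square algebra_simps abs_mult_self_eq field_simps)
  then show ?thesis
    using x by (simp add: y_def B_def algebra_simps)
qed

lemma summable_on_int_gaussian:
  fixes a \<alpha> \<beta> c :: real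
  assumes a: "a > 0" and \<alpha>: "\<alpha> \<noteq> 0"
  shows "(\<lambda>n::int. exp (- a * (\<alpha> * real_of_int n + \<beta>)\<^sup>2 + c)) summable_on UNIV"
proof -
  define C where "C = (1 / \<bar>\<alpha>\<bar>)\<^sup>2 / (4 * a) + \<bar>\<beta>\<bar> / \<bar>\<alpha>\<bar> + c"
  have "(\<lambda>n::int. norm (exp C * exp (- \<bar>real_of_int n\<bar>))) summable_on UNIV"
    using summable_on_cmult_right[OF summable_on_exp_neg_abs_int, of "exp C"] by simp
  then have "(\<lambda>n::int. norm (exp (- a * (\<alpha> * real_of_int n + \<beta>)\<^sup>2 + c))) summable_on UNIV"
  proof (rule Infinite_Sum.abs_summable_on_comparison_test)
    fix n :: int
    have "- a * (\<alpha> * real_of_int n + \<beta>)\<^sup>2 + c \<le> C + - \<bar>real_of_int n\<bar>"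
      using neg_quadratic_le_linear_decay[OF a \<alpha>, of "real_of_int n" \<beta>] by (simp add: C_def)
    then show "norm (exp (- a * (\<alpha> * real_of_int n + \<beta>)\<^sup>2 + c)) \<le> norm (exp C * exp (- \<bar>real_of_int n\<bar>))"
      by (simp add: exp_add[symmetric])
  qed
  then show ?thesis
    by (rule abs_summable_summable)
qed

text \<open>The \<open>n\<close>-th term of the theta series in \<open>M\<^sub>j(x, t)\<close> is a Fourier mode of frequency
  \<open>freq NN J n / r\<close> in \<open>x\<close> with weight \<open>gauss_weight r t NN J n\<close>; the weights sum to
  \<open>\<vartheta>\<^sub>2(NN J \<tau>(t); NN\<^sup>2 \<tau>(t))\<close>.\<close>

definition freq :: "real \<Rightarrow> real \<Rightarrow> int \<Rightarrow> real" where
  "freq NN J n = NN * (of_int n - 1/2) + J"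

definition gauss_weight :: "real \<Rightarrow> real \<Rightarrow> real \<Rightarrow> real \<Rightarrow> int \<Rightarrow> real" where
  "gauss_weight r t NN J n = exp (- (t / (2 * r\<^sup>2)) * ((freq NN J n)\<^sup>2 - J\<^sup>2))"

lemma gauss_weight_mult:
  "gauss_weight r s NN J n * gauss_weight r t NN J n = gauss_weight r (s + t) NN J n"
  unfolding gauss_weight_def exp_add[symmetric]
  by (rule arg_cong[where f = exp]) (simp add: add_divide_distrib[symmetric] algebra_simps)

lemma gauss_weight_cong:
  "freq NN J n' = - freq NN J n \<Longrightarrow> gauss_weight r t NN J n' = gauss_weight r t NN J n"
  by (simp add: gauss_weight_def)

lemma summable_on_gauss_weight:
  assumes "r \<noteq> 0" "t > 0" "NN \<noteq> 0"
  shows "gauss_weight r t NN J summable_on UNIV"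
proof -
  have "gauss_weight r t NN J
      = (\<lambda>n. exp (- (t / (2 * r\<^sup>2)) * (NN * real_of_int n + (J - NN / 2))\<^sup>2 + (t / (2 * r\<^sup>2)) * J\<^sup>2))"
    by (rule ext) (simp add: gauss_weight_def freq_def algebra_simps)
  then show ?thesis
    using summable_on_int_gaussian[of "t / (2 * r\<^sup>2)" NN "J - NN / 2" "(t / (2 * r\<^sup>2)) * J\<^sup>2"] assms
    by simp
qed

lemma theta_term_eq_gauss_weight:
  assumes "NN \<noteq> 0" "r \<noteq> 0"
    and X: "X = 2 * complex_of_real pi * \<i> * complex_of_real (J / NN) * complex_of_real u"
    and v: "v = complex_of_real (J / NN) * \<tau> + complex_of_real u"
    and \<tau>: "\<tau> = complex_of_real (NN\<^sup>2) * tauf r t"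
  shows "exp X * (exp (pi * \<i> * \<tau> * (of_int n - 1/2)^2) * exp (pi * \<i> * v * (2 * of_int n - 1)))
       = gauss_weight r t NN J n * exp (\<i> * complex_of_real (2 * pi * u * freq NN J n / NN))"
proof -
  have "exp X * (exp (pi * \<i> * \<tau> * (of_int n - 1/2)^2) * exp (pi * \<i> * v * (2 * of_int n - 1)))
      = exp (X + (pi * \<i> * \<tau> * (of_int n - 1/2)^2 + pi * \<i> * v * (2 * of_int n - 1)))"
    by (simp add: exp_add)
  also have "X + (pi * \<i> * \<tau> * (of_int n - 1/2)^2 + pi * \<i> * v * (2 * of_int n - 1))
      = complex_of_real (- (t / (2 * r\<^sup>2)) * ((freq NN J n)\<^sup>2 - J\<^sup>2))
        + \<i> * complex_of_real (2 * pi * u * freq NN J n / NN)"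
    unfolding X v \<tau> using assms(1,2) pi_neq_zero
    by (simp add: tauf_def freq_def field_simps power2_eq_square)
  finally show ?thesis
    by (simp only: exp_add gauss_weight_def exp_of_real)
qed

lemma jtheta2_has_sum_fourier:
  assumes "NN \<noteq> 0" "r \<noteq> 0" "t > 0"
    and X: "X = 2 * complex_of_real pi * \<i> * complex_of_real (J / NN) * complex_of_real u"
    and v: "v = complex_of_real (J / NN) * \<tau> + complex_of_real u"
    and \<tau>: "\<tau> = complex_of_real (NN\<^sup>2) * tauf r t"
  shows "((\<lambda>n. gauss_weight r t NN J n * exp (\<i> * complex_of_real (2 * pi * u * freq NN J n / NN)))
           has_sum (exp X * jtheta2 v \<tau>)) UNIV"
proof -
  define T where "T n = exp (pi * \<i> * \<tau> * (of_int n - 1/2)^2) * exp (pi * \<i> * v * (2 * of_int n - 1))" for n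
  have eq: "exp X * T n = gauss_weight r t NN J n * exp (\<i> * complex_of_real (2 * pi * u * freq NN J n / NN))" for n
    unfolding T_def by (rule theta_term_eq_gauss_weight[OF assms(1,2) X v \<tau>])
  have "norm (exp X * T n) = gauss_weight r t NN J n" for n
    unfolding eq by (simp add: norm_mult norm_exp_i_times gauss_weight_def)
  then have "(\<lambda>n. norm (exp X * T n)) summable_on UNIV"
    using summable_on_gauss_weight[OF assms(2,3,1)] by simp
  then have "T summable_on UNIV"
    by (subst summable_on_cmult_right'[of "exp X", symmetric]) (auto intro: abs_summable_summable)
  then have "(T has_sum jtheta2 v \<tau>) UNIV"
    unfolding jtheta2_def T_def by (rule has_sum_infsum[unfolded T_def])
  then show ?thesis
    unfolding eq[symmetric] by (rule has_sum_cmult_right)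
qed

lemma jtheta1_has_sum_fourier:
  assumes "NN \<noteq> 0" "r \<noteq> 0" "t > 0"
    and X: "X = 2 * complex_of_real pi * \<i> * complex_of_real (J / NN) * complex_of_real u"
    and v: "v = complex_of_real (J / NN) * \<tau> + complex_of_real u"
    and \<tau>: "\<tau> = complex_of_real (NN\<^sup>2) * tauf r t"
  shows "((\<lambda>n. \<i> * (-1) ^ nat \<bar>n\<bar> * (gauss_weight r t NN J n * exp (\<i> * complex_of_real (2 * pi * u * freq NN J n / NN))))
           has_sum (exp X * jtheta1 v \<tau>)) UNIV"
proof -
  define T where "T n = (-1) ^ nat \<bar>n\<bar> * exp (pi * \<i> * \<tau> * (of_int n - 1/2)^2) * exp (pi * \<i> * v * (2 * of_int n - 1))" for n
  have eq: "exp X * (\<i> * T n) = \<i> * (-1) ^ nat \<bar>n\<bar> * (gauss_weight r t NN J n * exp (\<i> * complex_of_real (2 * pi * u * freq NN J n / NN)))" for n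
    unfolding T_def using theta_term_eq_gauss_weight[OF assms(1,2) X v \<tau>, of n] by (simp add: mult_ac)
  have "norm (exp X * (\<i> * T n)) = gauss_weight r t NN J n" for n
    unfolding eq by (simp add: norm_mult norm_power norm_exp_i_times gauss_weight_def)
  then have "(\<lambda>n. norm (exp X * (\<i> * T n))) summable_on UNIV"
    using summable_on_gauss_weight[OF assms(2,3,1)] by simp
  then have "T summable_on UNIV"
    by (subst summable_on_cmult_right'[of "exp X * \<i>", symmetric]) (auto intro: abs_summable_summable simp: mult.assoc)
  then have "((\<lambda>n. \<i> * T n) has_sum jtheta1 v \<tau>) UNIV"
    unfolding jtheta1_def T_def by (intro has_sum_cmult_right has_sum_infsum[unfolded T_def])
  then show ?thesis
    unfolding eq[symmetric] by (rule has_sum_cmult_right)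
qed

lemma has_sum_diff:
  fixes f g :: "'a \<Rightarrow> 'b::topological_ab_group_add"
  assumes "(f has_sum a) A" "(g has_sum b) A"
  shows "((\<lambda>x. f x - g x) has_sum (a - b)) A"
proof -
  have "((\<lambda>x. - g x) has_sum (- b)) A"
    using assms(2) by (subst has_sum_uminus) simp
  from has_sum_add[OF assms(1) this] show ?thesis
    by simp
qed

definition wave :: "theta_kind \<Rightarrow> real \<Rightarrow> complex" where
  "wave k y = (case k of ThA \<Rightarrow> exp (\<i> * of_real y) | ThD \<Rightarrow> of_real (cos y) | _ \<Rightarrow> of_real (sin y))"

definition theta_coeff :: "theta_kind \<Rightarrow> int \<Rightarrow> complex" where
  "theta_coeff k n = (case k of ThA \<Rightarrow> 1 | ThB \<Rightarrow> - 2 * (-1) ^ nat \<bar>n\<bar> | ThC \<Rightarrow> 2 * \<i> | ThD \<Rightarrow> 2)"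

definition Theta_scaled :: "theta_kind \<Rightarrow> real \<Rightarrow> real \<Rightarrow> real \<Rightarrow> real \<Rightarrow> real \<Rightarrow> complex" where
  "Theta_scaled k NN J r t x = Theta k (J / NN) (complex_of_real (NN * xi r x)) (complex_of_real (NN\<^sup>2) * tauf r t)"

lemma norm_wave_le_1: "norm (wave k y) \<le> 1"
  by (cases k) (simp_all add: wave_def norm_exp_i_times abs_sin_le_one abs_cos_le_one)

lemma norm_theta_coeff_le_2: "norm (theta_coeff k n) \<le> 2"
  by (cases k) (simp_all add: theta_coeff_def norm_mult norm_power)

lemma continuous_on_wave: "continuous_on A (\<lambda>x. wave k (x * w / r))"
proof -
  have "continuous_on UNIV (wave k)"
    by (cases k) (auto simp: wave_def intro!: continuous_intros)
  then have "continuous_on A (\<lambda>x. wave k (x * (w / r)))"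
    by (rule continuous_on_compose2[OF _ continuous_on_mult_right[OF continuous_on_id]]) auto
  then show ?thesis
    by simp
qed

lemma exp_i_of_real: "exp (\<i> * complex_of_real y) = complex_of_real (cos y) + \<i> * complex_of_real (sin y)"
  using exp_Euler[of "complex_of_real y"] by (simp add: cos_of_real sin_of_real)

lemma jtheta_has_sum_modes:
  fixes \<epsilon> x J :: real and z \<tau> :: complex and c :: "int \<Rightarrow> complex"
  assumes NN: "NN \<noteq> 0" and r: "r \<noteq> 0" and t: "t > 0" and \<epsilon>: "\<bar>\<epsilon>\<bar> = 1"
  defines "c \<equiv> \<lambda>n. gauss_weight r t NN J n
      * (complex_of_real (cos (x * freq NN J n / r)) + \<i> * \<epsilon> * complex_of_real (sin (x * freq NN J n / r)))"
    and "z \<equiv> complex_of_real (\<epsilon> * (NN * xi r x))" and "\<tau> \<equiv> complex_of_real (NN\<^sup>2) * tauf r t"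
  shows "(c has_sum exp (2 * pi * \<i> * (J / NN) * z) * jtheta2 ((J / NN) * \<tau> + z) \<tau>) UNIV"
    and "((\<lambda>n. \<i> * (-1) ^ nat \<bar>n\<bar> * c n) has_sum exp (2 * pi * \<i> * (J / NN) * z) * jtheta1 ((J / NN) * \<tau> + z) \<tau>) UNIV"
proof -
  have angle: "2 * pi * (\<epsilon> * (NN * xi r x)) * freq NN J n / NN = \<epsilon> * (x * freq NN J n / r)" for n
    using NN r by (simp add: xi_def field_simps)
  have cos_sin: "cos (\<epsilon> * y) = cos y" "sin (\<epsilon> * y) = \<epsilon> * sin y" for y
    using \<epsilon> by (auto simp: abs_if split: if_splits)
  have c: "c n = gauss_weight r t NN J n * exp (\<i> * complex_of_real (2 * pi * (\<epsilon> * (NN * xi r x)) * freq NN J n / NN))" for n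
    unfolding c_def angle exp_i_of_real cos_sin by simp
  show "(c has_sum exp (2 * pi * \<i> * (J / NN) * z) * jtheta2 ((J / NN) * \<tau> + z) \<tau>) UNIV"
    unfolding c by (rule jtheta2_has_sum_fourier[OF NN r t]) (simp_all add: z_def \<tau>_def)
  show "((\<lambda>n. \<i> * (-1) ^ nat \<bar>n\<bar> * c n) has_sum exp (2 * pi * \<i> * (J / NN) * z) * jtheta1 ((J / NN) * \<tau> + z) \<tau>) UNIV"
    unfolding c by (rule jtheta1_has_sum_fourier[OF NN r t]) (simp_all add: z_def \<tau>_def)
qed

lemma Theta_scaled_has_sum_fourier:
  assumes NN: "NN \<noteq> 0" and r: "r \<noteq> 0" and t: "t > 0"
  shows "((\<lambda>n. theta_coeff k n * gauss_weight r t NN J n * wave k (x * freq NN J n / r))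
           has_sum Theta_scaled k NN J r t x) UNIV"
proof -
  define y where "y n = x * freq NN J n / r" for n
  define c where "c \<epsilon> n = gauss_weight r t NN J n * (complex_of_real (cos (y n)) + \<i> * \<epsilon> * complex_of_real (sin (y n)))"
    for \<epsilon> :: real and n
  define z where "z \<epsilon> = complex_of_real (\<epsilon> * (NN * xi r x))" for \<epsilon> :: real
  define \<tau> where "\<tau> = complex_of_real (NN\<^sup>2) * tauf r t"
  define T where "T \<theta> \<epsilon> = exp (2 * pi * \<i> * (J / NN) * z \<epsilon>) * \<theta> ((J / NN) * \<tau> + z \<epsilon>) \<tau>" for \<theta> \<epsilon>
  have sum2: "(c \<epsilon> has_sum T jtheta2 \<epsilon>) UNIV" and sum1: "((\<lambda>n. \<i> * (-1) ^ nat \<bar>n\<bar> * c \<epsilon> n) has_sum T jtheta1 \<epsilon>) UNIV"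
    if "\<bar>\<epsilon>\<bar> = 1" for \<epsilon>
    using jtheta_has_sum_modes[OF NN r t that] unfolding c_def y_def z_def \<tau>_def T_def by blast+
  have "Theta_scaled k NN J r t x = (case k of ThA \<Rightarrow> T jtheta2 1 | ThB \<Rightarrow> T jtheta1 1 - T jtheta1 (-1)
      | ThC \<Rightarrow> T jtheta2 1 - T jtheta2 (-1) | ThD \<Rightarrow> T jtheta2 1 + T jtheta2 (-1))"
    by (cases k) (simp_all add: Theta_scaled_def Theta_def T_def z_def \<tau>_def)
  moreover have "(\<lambda>n. theta_coeff k n * gauss_weight r t NN J n * wave k (y n)) = (case k of ThA \<Rightarrow> c 1
      | ThB \<Rightarrow> (\<lambda>n. \<i> * (-1) ^ nat \<bar>n\<bar> * c 1 n - \<i> * (-1) ^ nat \<bar>n\<bar> * c (-1) n)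
      | ThC \<Rightarrow> (\<lambda>n. c 1 n - c (-1) n) | ThD \<Rightarrow> (\<lambda>n. c 1 n + c (-1) n))"
    by (cases k) (simp_all add: fun_eq_iff c_def theta_coeff_def wave_def exp_i_of_real algebra_simps)
  ultimately show ?thesis
    using sum2[of 1] sum2[of "-1"] sum1[of 1] sum1[of "-1"] unfolding y_def
    by (cases k) (simp_all add: has_sum_add has_sum_diff)
qed

lemma summable_on_norm_theta_coeff:
  assumes "r \<noteq> 0" "t > 0" "NN \<noteq> 0"
  shows "(\<lambda>n. norm (theta_coeff k n * gauss_weight r t NN J n)) summable_on UNIV"
proof -
  have "(\<lambda>n. norm (2 * gauss_weight r t NN J n)) summable_on UNIV"
    using summable_on_cmult_right[OF summable_on_gauss_weight[OF assms], of 2 J]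
    by (simp add: gauss_weight_def)
  then show ?thesis
  proof (rule Infinite_Sum.abs_summable_on_comparison_test)
    fix n
    have "norm (theta_coeff k n * gauss_weight r t NN J n) = norm (theta_coeff k n) * gauss_weight r t NN J n"
      by (simp add: norm_mult gauss_weight_def)
    also have "\<dots> \<le> 2 * gauss_weight r t NN J n"
      using norm_theta_coeff_le_2 by (intro mult_right_mono) (auto simp: gauss_weight_def)
    finally show "norm (theta_coeff k n * gauss_weight r t NN J n) \<le> norm (2 * gauss_weight r t NN J n)"
      by (simp add: gauss_weight_def)
  qed
qed

lemma has_sum_integral_uniform:
  fixes f :: "int \<Rightarrow> real \<Rightarrow> complex"
  assumes cont: "\<And>n. continuous_on {c..d} (f n)"
    and bound: "\<And>n x. x \<in> {c..d} \<Longrightarrow> norm (f n x) \<le> B n"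
    and B: "B summable_on UNIV"
    and F: "\<And>x. x \<in> {c..d} \<Longrightarrow> ((\<lambda>n. f n x) has_sum F x) UNIV"
  shows "((\<lambda>n. integral {c..d} (f n)) has_sum integral {c..d} F) UNIV"
    and "continuous_on {c..d} F"
proof -
  have U: "uniform_limit {c..d} (\<lambda>X y. \<Sum>n\<in>X. f n y) F (finite_subsets_at_top UNIV)"
    by (rule Weierstrass_m_test_general'[OF bound F B]) auto
  have C: "continuous_on {c..d} (\<lambda>y. \<Sum>n\<in>X. f n y)" for X
    by (intro continuous_on_sum cont)
  show "continuous_on {c..d} F"
    by (rule uniform_limit_theorem[OF _ U]) (auto simp: C finite_subsets_at_top_neq_bot)
  obtain I J where I: "\<And>X. ((\<lambda>y. \<Sum>n\<in>X. f n y) has_integral I X) {c..d}"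
    and J: "(F has_integral J) {c..d}" and lim: "(I \<longlongrightarrow> J) (finite_subsets_at_top UNIV)"
    using uniform_limit_integral[OF U C finite_subsets_at_top_neq_bot] by blast
  have "I X = (\<Sum>n\<in>X. integral {c..d} (f n))" if "finite X" for X
  proof -
    have "((\<lambda>y. \<Sum>n\<in>X. f n y) has_integral (\<Sum>n\<in>X. integral {c..d} (f n))) {c..d}"
      using that by (intro has_integral_sum) (auto intro!: integrable_integral integrable_continuous_real cont)
    then show ?thesis
      using I[of X] by (rule has_integral_unique[symmetric])
  qed
  then have "\<forall>\<^sub>F X in finite_subsets_at_top UNIV. I X = (\<Sum>n\<in>X. integral {c..d} (f n))"
    by (intro eventually_finite_subsets_at_top_weakI) auto
  then have "((\<lambda>X. \<Sum>n\<in>X. integral {c..d} (f n)) \<longlongrightarrow> J) (finite_subsets_at_top UNIV)"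
    using tendsto_cong lim by fastforce
  then show "((\<lambda>n. integral {c..d} (f n)) has_sum integral {c..d} F) UNIV"
    using J by (simp add: has_sum_def integral_unique)
qed

lemma continuous_on_Theta_scaled:
  assumes "r \<noteq> 0" "t > 0" "NN \<noteq> 0"
  shows "continuous_on {c..d} (Theta_scaled k NN J r t)"
proof (rule has_sum_integral_uniform(2))
  show "norm (theta_coeff k n * gauss_weight r t NN J n * wave k (x * freq NN J n / r))
      \<le> norm (theta_coeff k n * gauss_weight r t NN J n)" for n x
    using norm_wave_le_1 by (simp add: norm_mult mult_left_le)
qed (use assms Theta_scaled_has_sum_fourier summable_on_norm_theta_coeff in
     \<open>auto intro!: continuous_intros continuous_on_wave\<close>)

lemma integral_cnj_series_mult:
  fixes a :: "int \<Rightarrow> complex" and \<phi> :: "int \<Rightarrow> real \<Rightarrow> complex" and F \<psi> :: "real \<Rightarrow> complex"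
  assumes a: "(\<lambda>n. norm (a n)) summable_on UNIV"
    and \<phi>: "\<And>n. continuous_on {c..d} (\<phi> n)" "\<And>n x. x \<in> {c..d} \<Longrightarrow> norm (\<phi> n x) \<le> 1"
    and \<psi>: "continuous_on {c..d} \<psi>" "\<And>x. x \<in> {c..d} \<Longrightarrow> norm (\<psi> x) \<le> 1"
    and F: "\<And>x. x \<in> {c..d} \<Longrightarrow> ((\<lambda>n. a n * \<phi> n x) has_sum F x) UNIV"
  shows "integral {c..d} (\<lambda>x. cnj (F x) * \<psi> x) = (\<Sum>\<^sub>\<infinity>n. cnj (a n) * integral {c..d} (\<lambda>x. cnj (\<phi> n x) * \<psi> x))"
proof -
  have "((\<lambda>n. integral {c..d} (\<lambda>x. cnj (a n) * (cnj (\<phi> n x) * \<psi> x)))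
      has_sum integral {c..d} (\<lambda>x. cnj (F x) * \<psi> x)) UNIV"
  proof (rule has_sum_integral_uniform(1))
    show "norm (cnj (a n) * (cnj (\<phi> n x) * \<psi> x)) \<le> norm (a n)" if "x \<in> {c..d}" for n x
      using \<phi>(2)[OF that, of n] \<psi>(2)[OF that] by (simp add: norm_mult mult_left_le mult_le_one)
    show "((\<lambda>n. cnj (a n) * (cnj (\<phi> n x) * \<psi> x)) has_sum cnj (F x) * \<psi> x) UNIV" if "x \<in> {c..d}" for x
      using has_sum_cmult_left[OF F[OF that, THEN has_sum_cnj_iff[THEN iffD2]], of "\<psi> x"]
      by (simp add: mult_ac)
  qed (use a \<phi>(1) \<psi>(1) in \<open>auto intro!: continuous_intros\<close>)
  then show ?thesis
    by (simp add: infsumI Henstock_Kurzweil_Integration.integral_mult_right)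
qed

lemma has_sum_integral_cnj_mult:
  fixes a b :: "int \<Rightarrow> complex" and \<phi> \<psi> :: "int \<Rightarrow> real \<Rightarrow> complex" and F G :: "real \<Rightarrow> complex"
  assumes a: "(\<lambda>n. norm (a n)) summable_on UNIV" and b: "(\<lambda>n. norm (b n)) summable_on UNIV"
    and \<phi>: "\<And>n. continuous_on {c..d} (\<phi> n)" "\<And>n x. x \<in> {c..d} \<Longrightarrow> norm (\<phi> n x) \<le> 1"
    and \<psi>: "\<And>n. continuous_on {c..d} (\<psi> n)" "\<And>n x. x \<in> {c..d} \<Longrightarrow> norm (\<psi> n x) \<le> 1"
    and F: "\<And>x. x \<in> {c..d} \<Longrightarrow> ((\<lambda>n. a n * \<phi> n x) has_sum F x) UNIV"
    and G: "\<And>x. x \<in> {c..d} \<Longrightarrow> ((\<lambda>m. b m * \<psi> m x) has_sum G x) UNIV"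
  shows "((\<lambda>m. b m * (\<Sum>\<^sub>\<infinity>n. cnj (a n) * integral {c..d} (\<lambda>x. cnj (\<phi> n x) * \<psi> m x)))
           has_sum integral {c..d} (\<lambda>x. cnj (F x) * G x)) UNIV"
proof -
  have contF: "continuous_on {c..d} F"
  proof (rule has_sum_integral_uniform(2)[OF _ _ a F])
    show "norm (a n * \<phi> n x) \<le> norm (a n)" if "x \<in> {c..d}" for n x
      using \<phi>(2)[OF that, of n] by (simp add: norm_mult mult_left_le)
  qed (intro continuous_intros \<phi>)
  then obtain K where K: "K > 0" "\<And>x. x \<in> {c..d} \<Longrightarrow> norm (F x) \<le> K"
    using compact_imp_bounded[OF compact_continuous_image[OF contF compact_Icc]] unfolding bounded_pos by auto
  have "((\<lambda>m. integral {c..d} (\<lambda>x. b m * (cnj (F x) * \<psi> m x))) has_sum integral {c..d} (\<lambda>x. cnj (F x) * G x)) UNIV"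
  proof (rule has_sum_integral_uniform(1))
    show "norm (b m * (cnj (F x) * \<psi> m x)) \<le> K * norm (b m)" if "x \<in> {c..d}" for m x
    proof -
      have "norm (cnj (F x) * \<psi> m x) \<le> K * 1"
        unfolding norm_mult complex_mod_cnj using K(2)[OF that] \<psi>(2)[OF that] K(1)
        by (intro mult_mono) auto
      then have "norm (b m) * norm (cnj (F x) * \<psi> m x) \<le> norm (b m) * K"
        by (intro mult_left_mono) auto
      then show ?thesis
        by (metis mult.commute norm_mult)
    qed
    show "((\<lambda>m. b m * (cnj (F x) * \<psi> m x)) has_sum cnj (F x) * G x) UNIV" if "x \<in> {c..d}" for x
      using has_sum_cmult_right[OF G[OF that], of "cnj (F x)"] by (simp add: mult_ac)
  qed (use b contF \<psi>(1) in \<open>auto intro!: continuous_intros summable_on_cmult_right\<close>)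
  moreover have "integral {c..d} (\<lambda>x. cnj (F x) * \<psi> m x)
      = (\<Sum>\<^sub>\<infinity>n. cnj (a n) * integral {c..d} (\<lambda>x. cnj (\<phi> n x) * \<psi> m x))" for m
    by (rule integral_cnj_series_mult[OF a \<phi> \<psi>(1) \<psi>(2) F])
  ultimately show ?thesis
    by (simp only: Henstock_Kurzweil_Integration.integral_mult_right)
qed

lemma Theta_scaled_gram_has_sum:
  assumes "r \<noteq> 0" "s > 0" "t > 0" "NN \<noteq> 0"
  shows "((\<lambda>m. theta_coeff k m * gauss_weight r t NN J' m *
            (\<Sum>\<^sub>\<infinity>n. cnj (theta_coeff k n * gauss_weight r s NN J n) *
               integral {c..d} (\<lambda>x. cnj (wave k (x * freq NN J n / r)) * wave k (x * freq NN J' m / r))))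
         has_sum integral {c..d} (\<lambda>x. cnj (Theta_scaled k NN J r s x) * Theta_scaled k NN J' r t x)) UNIV"
  by (rule has_sum_integral_cnj_mult)
     (use assms in \<open>auto intro: summable_on_norm_theta_coeff Theta_scaled_has_sum_fourier
       continuous_on_wave norm_wave_le_1\<close>)

section \<open>Orthogonality of the Fourier modes\<close>

lemma has_integral_cos_int_freq:
  fixes k :: int and c :: nat
  assumes r: "r > 0"
  shows "((\<lambda>x. cos (x * of_int k / r)) has_integral (if k = 0 then of_nat c * pi * r else 0)) {0..of_nat c * pi * r}"
proof (cases "k = 0")
  case True
  then show ?thesis
    using has_integral_const_real[of "1::real" 0 "of_nat c * pi * r"] r by simp
next
  case False
  define F where "F (x::real) = r / of_int k * sin (x * of_int k / r)" for x
  have "(F has_vector_derivative cos (x * of_int k / r)) (at x within {0..of_nat c * pi * r})" for x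
    unfolding F_def has_real_derivative_iff_has_vector_derivative[symmetric]
    using False r by (auto intro!: derivative_eq_intros simp: field_simps)
  then have "((\<lambda>x. cos (x * of_int k / r)) has_integral (F (of_nat c * pi * r) - F 0)) {0..of_nat c * pi * r}"
    using r by (intro fundamental_theorem_of_calculus) auto
  moreover have "sin (of_nat c * pi * r * k / r) = 0"
    using r sin_npi_int[of "int c * k"] by (simp add: mult_ac)
  ultimately show ?thesis
    using False by (simp add: F_def)
qed

lemma has_integral_sin_int_freq:
  fixes k :: int
  assumes r: "r > 0"
  shows "((\<lambda>x. sin (x * of_int k / r)) has_integral 0) {0..2 * pi * r}"
proof (cases "k = 0")
  case False
  define F where "F (x::real) = - r / of_int k * cos (x * of_int k / r)" for x
  have "(F has_vector_derivative sin (x * of_int k / r)) (at x within {0..2 * pi * r})" for x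
    unfolding F_def has_real_derivative_iff_has_vector_derivative[symmetric]
    using False r by (auto intro!: derivative_eq_intros simp: field_simps)
  then have "((\<lambda>x. sin (x * of_int k / r)) has_integral (F (2 * pi * r) - F 0)) {0..2 * pi * r}"
    using r by (intro fundamental_theorem_of_calculus) auto
  moreover have "cos (2 * pi * r * of_int k / r) = 1"
    using r cos_int_2pin[of k] by (simp add: mult_ac)
  ultimately show ?thesis
    by (simp add: F_def)
qed simp

lemma has_integral_sin_mult_sin:
  fixes k1 k2 :: int
  assumes r: "r > 0" and k1: "w - w' = of_int k1" and k2: "w + w' = of_int k2"
  shows "((\<lambda>x. sin (x * w / r) * sin (x * w' / r)) has_integral
           pi * r / 2 * ((if w = w' then 1 else 0) - (if w = - w' then 1 else 0))) {0..pi * r}"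
proof -
  have pointwise: "sin (x * w / r) * sin (x * w' / r) = (cos (x * of_int k1 / r) - cos (x * of_int k2 / r)) / 2" for x
    unfolding k1[symmetric] k2[symmetric] sin_times_sin by (simp add: algebra_simps add_divide_distrib diff_divide_distrib)
  have "((\<lambda>x. (cos (x * of_int k1 / r) - cos (x * of_int k2 / r)) / 2) has_integral
      ((if k1 = 0 then pi * r else 0) - (if k2 = 0 then pi * r else 0)) / 2) {0..pi * r}"
    using has_integral_diff[OF has_integral_cos_int_freq[OF r, of k1 1] has_integral_cos_int_freq[OF r, of k2 1]]
    unfolding of_nat_1 mult_1 by (rule has_integral_divide)
  moreover have "w = w' \<longleftrightarrow> k1 = 0" "w = - w' \<longleftrightarrow> k2 = 0"
    using k1 k2 by (auto simp: algebra_simps)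
  ultimately show ?thesis
    unfolding pointwise by (auto simp: field_simps)
qed

lemma has_integral_cos_mult_cos:
  fixes k1 k2 :: int
  assumes r: "r > 0" and k1: "w - w' = of_int k1" and k2: "w + w' = of_int k2"
  shows "((\<lambda>x. cos (x * w / r) * cos (x * w' / r)) has_integral
           pi * r / 2 * ((if w = w' then 1 else 0) + (if w = - w' then 1 else 0))) {0..pi * r}"
proof -
  have pointwise: "cos (x * w / r) * cos (x * w' / r) = (cos (x * of_int k1 / r) + cos (x * of_int k2 / r)) / 2" for x
    unfolding k1[symmetric] k2[symmetric] cos_times_cos by (simp add: algebra_simps add_divide_distrib diff_divide_distrib)
  have "((\<lambda>x. (cos (x * of_int k1 / r) + cos (x * of_int k2 / r)) / 2) has_integral
      ((if k1 = 0 then pi * r else 0) + (if k2 = 0 then pi * r else 0)) / 2) {0..pi * r}"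
    using has_integral_add[OF has_integral_cos_int_freq[OF r, of k1 1] has_integral_cos_int_freq[OF r, of k2 1]]
    unfolding of_nat_1 mult_1 by (rule has_integral_divide)
  moreover have "w = w' \<longleftrightarrow> k1 = 0" "w = - w' \<longleftrightarrow> k2 = 0"
    using k1 k2 by (auto simp: algebra_simps)
  ultimately show ?thesis
    unfolding pointwise by (auto simp: field_simps)
qed

lemma has_integral_cnj_exp_mult_exp:
  fixes k :: int
  assumes r: "r > 0" and k: "w' - w = of_int k"
  shows "((\<lambda>x. cnj (exp (\<i> * complex_of_real (x * w / r))) * exp (\<i> * complex_of_real (x * w' / r)))
           has_integral (if w = w' then complex_of_real (2 * pi * r) else 0)) {0..2 * pi * r}"
proof -
  have "complex_of_real (x * w' / r) - complex_of_real (x * w / r) = complex_of_real (x * of_int k / r)" for x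
    using k by (simp only: of_real_diff[symmetric]) (simp add: algebra_simps diff_divide_distrib[symmetric])
  then have "\<i> * complex_of_real (x * w' / r) - \<i> * complex_of_real (x * w / r) = \<i> * complex_of_real (x * of_int k / r)" for x
    by (simp only: right_diff_distrib[symmetric])
  then have "cnj (exp (\<i> * complex_of_real (x * w / r))) * exp (\<i> * complex_of_real (x * w' / r))
      = complex_of_real (cos (x * of_int k / r)) + \<i> * complex_of_real (sin (x * of_int k / r))" for x
    by (simp add: exp_cnj exp_add[symmetric] exp_i_of_real[symmetric])
  moreover have cos_2pi: "((\<lambda>x. cos (x * of_int k / r)) has_integral (if k = 0 then 2 * pi * r else 0)) {0..2 * pi * r}"
    using has_integral_cos_int_freq[OF r, of k 2] unfolding of_nat_numeral .
  moreover have "((\<lambda>x. complex_of_real (cos (x * of_int k / r)) + \<i> * complex_of_real (sin (x * of_int k / r)))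
      has_integral complex_of_real (if k = 0 then 2 * pi * r else 0)) {0..2 * pi * r}"
    using has_integral_add[OF has_integral_of_real[OF cos_2pi]
        has_integral_mult_right[OF has_integral_of_real[OF has_integral_sin_int_freq[OF r, of k]], of \<i>]]
    by simp
  moreover have "w = w' \<longleftrightarrow> k = 0"
    using k by auto
  ultimately show ?thesis
    by (auto simp: if_distrib)
qed

lemma int_mult_add_eq_0_iff:
  fixes n d k :: int
  assumes "n > 0" "\<bar>d\<bar> < n"
  shows "n * k + d = 0 \<longleftrightarrow> k = 0 \<and> d = 0"
proof
  assume h: "n * k + d = 0"
  then have "n * \<bar>k\<bar> = \<bar>d\<bar>"
    using assms(1) by (metis abs_minus_cancel abs_mult abs_of_pos add.commute add_eq_0_iff)
  then have "\<bar>k\<bar> < 1"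
    using assms by (metis mult.right_neutral mult_less_cancel_left_pos)
  then show "k = 0 \<and> d = 0"
    using h by simp
qed simp

lemma freq_eq_iff:
  assumes NN: "NN = of_int N0" "N0 > 0" and d1: "J - J' = of_int d1" "\<bar>d1\<bar> < N0"
  shows "freq NN J n = freq NN J' m \<longleftrightarrow> n = m \<and> J = J'"
proof -
  have "freq NN J n - freq NN J' m = of_int (N0 * (n - m) + d1)"
    using NN d1 by (simp add: freq_def algebra_simps)
  then have "freq NN J n = freq NN J' m \<longleftrightarrow> N0 * (n - m) + d1 = 0"
    by (metis eq_iff_diff_eq_0 of_int_eq_0_iff)
  then show ?thesis
    using int_mult_add_eq_0_iff[OF NN(2) d1(2), of "n - m"] d1(1) by auto
qed

lemma freq_eq_uminus_iff:
  assumes NN: "NN = of_int N0" "N0 > 0" and d2: "J + J' = of_int d2" "0 \<le> d2" "d2 \<le> N0"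
  shows "freq NN J n = - freq NN J' m \<longleftrightarrow> (J + J' = 0 \<and> n = 1 - m) \<or> (J + J' = NN \<and> n = - m)"
proof -
  have "freq NN J n + freq NN J' m = of_int (N0 * (n + m - 1) + d2)"
    using NN d2 by (simp add: freq_def algebra_simps)
  then have "freq NN J n = - freq NN J' m \<longleftrightarrow> N0 * (n + m - 1) + d2 = 0"
    by (metis eq_neg_iff_add_eq_0 of_int_eq_0_iff)
  also have "\<dots> \<longleftrightarrow> (d2 = 0 \<and> n = 1 - m) \<or> (d2 = N0 \<and> n = - m)"
  proof (cases "d2 = N0")
    case True
    then have "N0 * (n + m - 1) + d2 = N0 * (n + m)"
      by (simp add: algebra_simps)
    then show ?thesis
      using True NN(2) by auto
  next
    case False
    then show ?thesis
      using int_mult_add_eq_0_iff[OF NN(2), of d2 "n + m - 1"] d2 by auto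
  qed
  finally show ?thesis
    using NN d2 by auto
qed

lemma integral_wave_ThA:
  assumes r: "r > 0" and NN: "NN = of_int N0" "N0 > 0" and d1: "J - J' = of_int d1" "\<bar>d1\<bar> < N0"
  shows "integral {0..2 * pi * r} (\<lambda>x. cnj (wave ThA (x * freq NN J n / r)) * wave ThA (x * freq NN J' m / r))
       = (if n = m \<and> J = J' then complex_of_real (2 * pi * r) else 0)"
proof -
  have "freq NN J' m - freq NN J n = of_int (- (N0 * (n - m) + d1))"
    using NN d1 by (simp add: freq_def algebra_simps)
  then have "((\<lambda>x. cnj (wave ThA (x * freq NN J n / r)) * wave ThA (x * freq NN J' m / r)) has_integral
      (if freq NN J n = freq NN J' m then complex_of_real (2 * pi * r) else 0)) {0..2 * pi * r}"
    unfolding wave_def theta_kind.case by (rule has_integral_cnj_exp_mult_exp[OF r])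
  then show ?thesis
    unfolding freq_eq_iff[OF NN d1] by (rule integral_unique)
qed

text \<open>On \<open>[0, \<pi> r]\<close> the sine (cosine) modes are orthogonal up to the reflection \<open>freq \<mapsto> - freq\<close>.\<close>

lemma integral_wave_reflect:
  assumes k: "k \<noteq> ThA" and r: "r > 0" and NN: "NN = of_int N0" "N0 > 0"
    and d1: "J - J' = of_int d1" "\<bar>d1\<bar> < N0" and d2: "J + J' = of_int d2" "0 \<le> d2" "d2 \<le> N0"
  shows "integral {0..pi * r} (\<lambda>x. cnj (wave k (x * freq NN J n / r)) * wave k (x * freq NN J' m / r))
       = complex_of_real (pi * r / 2 * ((if n = m \<and> J = J' then 1 else 0)
           + (if k = ThD then 1 else -1) * (if (J + J' = 0 \<and> n = 1 - m) \<or> (J + J' = NN \<and> n = - m) then 1 else 0)))"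
proof -
  have diff: "freq NN J n - freq NN J' m = of_int (N0 * (n - m) + d1)"
    and sum: "freq NN J n + freq NN J' m = of_int (N0 * (n + m - 1) + d2)"
    using NN d1 d2 by (simp_all add: freq_def algebra_simps)
  define trig :: "real \<Rightarrow> real" where "trig = (if k = ThD then cos else sin)"
  let ?c = "pi * r / 2 * ((if n = m \<and> J = J' then 1 else 0)
      + (if k = ThD then 1 else -1) * (if (J + J' = 0 \<and> n = 1 - m) \<or> (J + J' = NN \<and> n = - m) then 1 else 0))"
  have trig_integral: "((\<lambda>x. trig (x * freq NN J n / r) * trig (x * freq NN J' m / r)) has_integral ?c) {0..pi * r}"
  proof (cases "k = ThD")
    case True
    show ?thesis
      using has_integral_cos_mult_cos[OF r diff sum]
      unfolding freq_eq_iff[OF NN d1] freq_eq_uminus_iff[OF NN d2] trig_def using True by simp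
  next
    case False
    show ?thesis
      using has_integral_sin_mult_sin[OF r diff sum]
      unfolding freq_eq_iff[OF NN d1] freq_eq_uminus_iff[OF NN d2] trig_def using False by simp
  qed
  have "(\<lambda>x. cnj (wave k (x * freq NN J n / r)) * wave k (x * freq NN J' m / r))
      = (\<lambda>x. complex_of_real (trig (x * freq NN J n / r) * trig (x * freq NN J' m / r)))"
    using k by (cases k) (simp_all add: wave_def trig_def fun_eq_iff)
  then show ?thesis
    using integral_unique[OF has_integral_of_real[OF trig_integral]] by (simp only:)
qed

section \<open>Gram integrals of the theta functions\<close>

text \<open>The constant \<open>m\<^sub>j(T)\<close> is \<open>2 \<pi> r\<close> (or \<open>4 \<pi> r\<close>) times \<open>theta_diag (calN R N) (Jfun R j) r T\<close>.\<close>

definition theta_diag :: "real \<Rightarrow> real \<Rightarrow> real \<Rightarrow> real \<Rightarrow> complex" where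
  "theta_diag NN J r T = jtheta2 (complex_of_real (NN * J) * tauf r T) (complex_of_real (NN\<^sup>2) * tauf r T)"

lemma theta_diag_has_sum:
  assumes "NN \<noteq> 0" "r \<noteq> 0" "T > 0"
  shows "((\<lambda>n. complex_of_real (gauss_weight r T NN J n)) has_sum theta_diag NN J r T) UNIV"
  using jtheta2_has_sum_fourier[OF assms, of 0 J 0 "complex_of_real (NN * J) * tauf r T"]
  using assms by (simp add: theta_diag_def power2_eq_square)

lemma has_sum_single_point: "((\<lambda>n. if n = p then c else 0) has_sum c) UNIV"
  by (rule has_sum_finite_neutralI[where B = "{p}"]) auto

lemma has_sum_gauss_weight_eq:
  assumes "(f has_sum I) UNIV" "NN \<noteq> 0" "r \<noteq> 0" "T > 0"
    and "\<And>m. f m = (if P then complex_of_real c * gauss_weight r T NN J m else 0)"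
  shows "I = (if P then complex_of_real c * theta_diag NN J r T else 0)"
proof (cases P)
  case True
  then have "f = (\<lambda>m. complex_of_real c * gauss_weight r T NN J m)"
    using assms(5) by auto
  then have "(f has_sum complex_of_real c * theta_diag NN J r T) UNIV"
    using has_sum_cmult_right[OF theta_diag_has_sum[OF assms(2-4)]] by simp
  then show ?thesis
    using True has_sum_unique[OF assms(1)] by simp
next
  case False
  then have "f = (\<lambda>_. 0)"
    using assms(5) by auto
  then have "(f has_sum 0) UNIV"
    by simp
  then show ?thesis
    using False has_sum_unique[OF assms(1)] by simp
qed

lemma Theta_scaled_gram_ThA:
  assumes r: "r > 0" and s: "s > 0" and t: "t > 0" and NN: "NN = of_int N0" "N0 > 0"
    and d1: "J - J' = of_int d1" "\<bar>d1\<bar> < N0"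
  shows "integral {0..2 * pi * r} (\<lambda>x. cnj (Theta_scaled ThA NN J r s x) * Theta_scaled ThA NN J' r t x)
       = (if J = J' then complex_of_real (2 * pi * r) * theta_diag NN J r (s + t) else 0)"
proof -
  define a where "a n = theta_coeff ThA n * gauss_weight r s NN J n" for n
  have inner: "(\<Sum>\<^sub>\<infinity>n. cnj (a n) * integral {0..2 * pi * r}
        (\<lambda>x. cnj (wave ThA (x * freq NN J n / r)) * wave ThA (x * freq NN J' m / r)))
      = (if J = J' then cnj (a m) * complex_of_real (2 * pi * r) else 0)" for m
    by (rule infsumI, rule has_sum_finite_neutralI[where B = "{m}"])
       (auto simp: integral_wave_ThA[OF r NN d1])
  have NN0: "NN \<noteq> 0" and r0: "r \<noteq> 0" and st: "s + t > 0"
    using NN r s t by auto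
  show ?thesis
  proof (rule has_sum_gauss_weight_eq[OF Theta_scaled_gram_has_sum[OF r0 s t NN0, where k = ThA and c = 0
        and d = "2 * pi * r"] NN0 r0 st])
    show "theta_coeff ThA m * gauss_weight r t NN J' m * (\<Sum>\<^sub>\<infinity>n. cnj (theta_coeff ThA n * gauss_weight r s NN J n) *
        integral {0..2 * pi * r} (\<lambda>x. cnj (wave ThA (x * freq NN J n / r)) * wave ThA (x * freq NN J' m / r)))
      = (if J = J' then complex_of_real (2 * pi * r) * gauss_weight r (s + t) NN J m else 0)" for m
      unfolding inner[unfolded a_def] by (simp add: theta_coeff_def gauss_weight_mult[symmetric])
  qed
qed

lemma Theta_scaled_gram_reflect_has_sum:
  assumes k: "k \<noteq> ThA" and r: "r > 0" and s: "s > 0" and t: "t > 0" and NN: "NN = of_int N0" "N0 > 0"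
    and d1: "J - J' = of_int d1" "\<bar>d1\<bar> < N0" and d2: "J + J' = of_int d2" "0 \<le> d2" "d2 \<le> N0"
  defines "a \<equiv> \<lambda>n. theta_coeff k n * gauss_weight r s NN J n"
  shows "((\<lambda>m. theta_coeff k m * gauss_weight r t NN J' m * complex_of_real (pi * r / 2) *
            ((if J = J' then cnj (a m) else 0) + (if k = ThD then 1 else -1) *
              ((if J + J' = 0 then cnj (a (1 - m)) else 0) + (if J + J' = NN then cnj (a (- m)) else 0))))
          has_sum integral {0..pi * r} (\<lambda>x. cnj (Theta_scaled k NN J r s x) * Theta_scaled k NN J' r t x)) UNIV"
proof -
  have NN0: "NN \<noteq> 0"
    using NN by simp
  let ?\<epsilon> = "if k = ThD then 1 else -1 :: complex"
  have inner: "(\<Sum>\<^sub>\<infinity>n. cnj (a n) * integral {0..pi * r}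
        (\<lambda>x. cnj (wave k (x * freq NN J n / r)) * wave k (x * freq NN J' m / r)))
      = complex_of_real (pi * r / 2) * ((if J = J' then cnj (a m) else 0) + ?\<epsilon> *
              ((if J + J' = 0 then cnj (a (1 - m)) else 0) + (if J + J' = NN then cnj (a (- m)) else 0)))" for m
  proof -
    have "m \<noteq> 1 - m" "- m \<noteq> 1 - m"
      by presburger+
    then have pointwise: "cnj (a n) * integral {0..pi * r} (\<lambda>x. cnj (wave k (x * freq NN J n / r)) * wave k (x * freq NN J' m / r))
        = (if n = m then complex_of_real (pi * r / 2) * (if J = J' then cnj (a m) else 0) else 0)
          + (if n = 1 - m then complex_of_real (pi * r / 2) * ?\<epsilon> * (if J + J' = 0 then cnj (a (1 - m)) else 0) else 0)
          + (if n = - m then complex_of_real (pi * r / 2) * ?\<epsilon> * (if J + J' = NN then cnj (a (- m)) else 0) else 0)" for n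
      using NN0 by (auto simp: integral_wave_reflect[OF k r NN d1 d2])
    have "((\<lambda>n. cnj (a n) * integral {0..pi * r} (\<lambda>x. cnj (wave k (x * freq NN J n / r)) * wave k (x * freq NN J' m / r)))
        has_sum (complex_of_real (pi * r / 2) * (if J = J' then cnj (a m) else 0)
          + complex_of_real (pi * r / 2) * ?\<epsilon> * (if J + J' = 0 then cnj (a (1 - m)) else 0)
          + complex_of_real (pi * r / 2) * ?\<epsilon> * (if J + J' = NN then cnj (a (- m)) else 0))) UNIV"
      unfolding pointwise by (intro has_sum_add has_sum_single_point)
    then show ?thesis
      by (simp add: infsumI algebra_simps)
  qed
  have r0: "r \<noteq> 0"
    using r by simp
  show ?thesis
    using Theta_scaled_gram_has_sum[OF r0 s t NN0, where k = k and c = 0 and d = "pi * r" and J = J and J' = J']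
    unfolding inner[unfolded a_def] a_def by (simp only: mult.assoc)
qed

lemma Theta_scaled_gram_ThC:
  assumes r: "r > 0" and s: "s > 0" and t: "t > 0" and NN: "NN = of_int N0" "N0 > 0"
    and d1: "J - J' = of_int d1" "\<bar>d1\<bar> < N0" and d2: "J + J' = of_int d2" "0 < d2" "d2 < N0"
  shows "integral {0..pi * r} (\<lambda>x. cnj (Theta_scaled ThC NN J r s x) * Theta_scaled ThC NN J' r t x)
       = (if J = J' then complex_of_real (2 * pi * r) * theta_diag NN J r (s + t) else 0)"
proof (rule has_sum_gauss_weight_eq[OF Theta_scaled_gram_reflect_has_sum[OF _ r s t NN d1 d2(1)]])
  have "J + J' \<noteq> 0" "J + J' \<noteq> NN"
    using d2 NN by auto
  then show "theta_coeff ThC m * gauss_weight r t NN J' m * complex_of_real (pi * r / 2) *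
      ((if J = J' then cnj (theta_coeff ThC m * gauss_weight r s NN J m) else 0) + (if ThC = ThD then 1 else -1) *
        ((if J + J' = 0 then cnj (theta_coeff ThC (1 - m) * gauss_weight r s NN J (1 - m)) else 0)
         + (if J + J' = NN then cnj (theta_coeff ThC (- m) * gauss_weight r s NN J (- m)) else 0)))
    = (if J = J' then complex_of_real (2 * pi * r) * gauss_weight r (s + t) NN J m else 0)" for m
    by (simp add: theta_coeff_def gauss_weight_mult[symmetric] algebra_simps)
qed (use r s t NN d2 in auto)

lemma theta_coeff_ThB_1_minus: "theta_coeff ThB (1 - m) = - theta_coeff ThB m"
proof -
  have "even (nat \<bar>1 - m\<bar>) \<longleftrightarrow> \<not> even (nat \<bar>m\<bar>)"
    by (simp add: even_nat_iff)
  then show ?thesis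
    by (auto simp: theta_coeff_def minus_one_power_iff)
qed

lemma theta_coeff_ThB_mult_cnj: "theta_coeff ThB m * cnj (theta_coeff ThB m) = 4"
  by (simp add: theta_coeff_def power_mult_distrib[symmetric])

lemma Theta_scaled_gram_ThB:
  assumes r: "r > 0" and s: "s > 0" and t: "t > 0" and NN: "NN = of_int N0" "N0 > 0"
    and d1: "J - J' = of_int d1" "\<bar>d1\<bar> < N0" and d2: "J + J' = of_int d2" "0 \<le> d2" "d2 < N0"
    and J: "J \<ge> 0" "J' \<ge> 0"
  shows "integral {0..pi * r} (\<lambda>x. cnj (Theta_scaled ThB NN J r s x) * Theta_scaled ThB NN J' r t x)
       = (if J = J' then complex_of_real ((if J = 0 then 4 else 2) * pi * r) * theta_diag NN J r (s + t) else 0)"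
proof (rule has_sum_gauss_weight_eq[OF Theta_scaled_gram_reflect_has_sum[OF _ r s t NN d1 d2(1)]])
  fix m
  let ?\<kappa> = "theta_coeff ThB"
  have NN_sum: "J + J' \<noteq> NN"
    using d2 NN by auto
  show "?\<kappa> m * gauss_weight r t NN J' m * complex_of_real (pi * r / 2) *
      ((if J = J' then cnj (?\<kappa> m * gauss_weight r s NN J m) else 0) + (if ThB = ThD then 1 else -1) *
        ((if J + J' = 0 then cnj (?\<kappa> (1 - m) * gauss_weight r s NN J (1 - m)) else 0)
         + (if J + J' = NN then cnj (?\<kappa> (- m) * gauss_weight r s NN J (- m)) else 0)))
    = (if J = J' then complex_of_real ((if J = 0 then 4 else 2) * pi * r) * gauss_weight r (s + t) NN J m else 0)"
  proof (cases "J = J'")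
    case True
    show ?thesis
    proof (cases "J = 0")
      case J0: True
      have "gauss_weight r s NN J (1 - m) = gauss_weight r s NN J m"
        using J0 by (intro gauss_weight_cong) (simp add: freq_def algebra_simps)
      then show ?thesis
        using True J0 NN_sum theta_coeff_ThB_mult_cnj[of m]
        by (simp add: theta_coeff_ThB_1_minus gauss_weight_mult[symmetric] algebra_simps)
    next
      case False
      then show ?thesis
        using True NN_sum J theta_coeff_ThB_mult_cnj[of m]
        by (simp add: gauss_weight_mult[symmetric] algebra_simps)
    qed
  next
    case False
    then have "J + J' \<noteq> 0"
      using J by auto
    then show ?thesis
      using False NN_sum by simp
  qed
qed (use r s t NN d2 in auto)

lemma Theta_scaled_gram_ThD:
  assumes r: "r > 0" and s: "s > 0" and t: "t > 0" and NN: "NN = of_int N0" "N0 > 0"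
    and d1: "J - J' = of_int d1" "\<bar>d1\<bar> < N0" and d2: "J + J' = of_int d2" "0 \<le> d2" "d2 \<le> N0"
    and J: "0 \<le> J" "0 \<le> J'" "2 * J \<le> NN" "2 * J' \<le> NN"
  shows "integral {0..pi * r} (\<lambda>x. cnj (Theta_scaled ThD NN J r s x) * Theta_scaled ThD NN J' r t x)
       = (if J = J' then complex_of_real ((if J = 0 \<or> 2 * J = NN then 4 else 2) * pi * r) * theta_diag NN J r (s + t)
          else 0)"
proof (rule has_sum_gauss_weight_eq[OF Theta_scaled_gram_reflect_has_sum[OF _ r s t NN d1 d2]])
  fix m
  have NN0: "NN > 0"
    using NN by simp
  show "theta_coeff ThD m * gauss_weight r t NN J' m * complex_of_real (pi * r / 2) *
      ((if J = J' then cnj (theta_coeff ThD m * gauss_weight r s NN J m) else 0) + (if ThD = ThD then 1 else -1) *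
        ((if J + J' = 0 then cnj (theta_coeff ThD (1 - m) * gauss_weight r s NN J (1 - m)) else 0)
         + (if J + J' = NN then cnj (theta_coeff ThD (- m) * gauss_weight r s NN J (- m)) else 0)))
    = (if J = J' then complex_of_real ((if J = 0 \<or> 2 * J = NN then 4 else 2) * pi * r) * gauss_weight r (s + t) NN J m
       else 0)"
  proof (cases "J = J'")
    case True
    consider "J = 0" | "2 * J = NN" | "J \<noteq> 0" "2 * J \<noteq> NN"
      by blast
    then show ?thesis
    proof cases
      case 1
      have "gauss_weight r s NN J (1 - m) = gauss_weight r s NN J m"
        using 1 by (intro gauss_weight_cong) (simp add: freq_def algebra_simps)
      then show ?thesis
        using True 1 NN0 by (simp add: theta_coeff_def gauss_weight_mult[symmetric] algebra_simps)
    next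
      case 2
      have "gauss_weight r s NN J (- m) = gauss_weight r s NN J m"
        using 2 by (intro gauss_weight_cong) (simp add: freq_def algebra_simps)
      then show ?thesis
        using True 2 NN0 by (simp add: theta_coeff_def gauss_weight_mult[symmetric] algebra_simps)
    next
      case 3
      then show ?thesis
        using True by (simp add: theta_coeff_def gauss_weight_mult[symmetric] algebra_simps)
    qed
  next
    case False
    then have "J + J' \<noteq> 0" "J + J' \<noteq> NN"
      using J by auto
    then show ?thesis
      using False by simp
  qed
qed (use r s t NN in auto)

lemma Mfun_eq_Theta_scaled: "Mfun R N r j x t = Theta_scaled (sharp R) (calN R N) (Jfun R j) r t x"
  by (simp add: Mfun_def Theta_scaled_def)

lemma calN_nonzero: "N \<ge> 1 \<Longrightarrow> (R = RD \<Longrightarrow> N \<ge> 2) \<Longrightarrow> calN R N \<noteq> 0"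
  by (cases R) auto

lemma Mfun_gram:
  assumes N: "N \<ge> 1" "R = RD \<Longrightarrow> N \<ge> 2" and r: "r > 0" and s: "s > 0" and t: "t > 0"
    and j: "1 \<le> j" "j \<le> N" and l: "1 \<le> l" "l \<le> N"
  shows "integral {0..(if R = RA then 2 * pi * r else pi * r)} (\<lambda>x. cnj (Mfun R N r j x s) * Mfun R N r l x t)
       = (if j = l then mconst R N r j (s + t) else 0)"
proof (cases R)
  case RA
  show ?thesis
    using Theta_scaled_gram_ThA[OF r s t, where NN = "real N" and ?N0.0 = "int N"
        and J = "real j - 1/2" and J' = "real l - 1/2" and ?d1.0 = "int j - int l"] RA N j l
    by (simp add: Mfun_eq_Theta_scaled mconst_def theta_diag_def Let_def abs_less_iff)
next
  case RB
  show ?thesis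
    using Theta_scaled_gram_ThB[OF r s t, where NN = "2 * real N - 1" and ?N0.0 = "2 * int N - 1"
        and J = "real j - 1" and J' = "real l - 1" and ?d1.0 = "int j - int l" and ?d2.0 = "int j + int l - 2"] RB N j l
    by (simp add: Mfun_eq_Theta_scaled mconst_def theta_diag_def Let_def abs_less_iff)
next
  case RBv
  show ?thesis
    using Theta_scaled_gram_ThB[OF r s t, where NN = "2 * real N" and ?N0.0 = "2 * int N"
        and J = "real j - 1" and J' = "real l - 1" and ?d1.0 = "int j - int l" and ?d2.0 = "int j + int l - 2"] RBv N j l
    by (simp add: Mfun_eq_Theta_scaled mconst_def theta_diag_def Let_def abs_less_iff)
next
  case RC
  show ?thesis
    using Theta_scaled_gram_ThC[OF r s t, where NN = "2 * (real N + 1)" and ?N0.0 = "2 * int N + 2"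
        and J = "real j" and J' = "real l" and ?d1.0 = "int j - int l" and ?d2.0 = "int j + int l"] RC N j l
    by (simp add: Mfun_eq_Theta_scaled mconst_def theta_diag_def Let_def abs_less_iff)
next
  case RCv
  show ?thesis
    using Theta_scaled_gram_ThC[OF r s t, where NN = "2 * real N" and ?N0.0 = "2 * int N"
        and J = "real j - 1/2" and J' = "real l - 1/2" and ?d1.0 = "int j - int l" and ?d2.0 = "int j + int l - 1"] RCv N j l
    by (simp add: Mfun_eq_Theta_scaled mconst_def theta_diag_def Let_def abs_less_iff)
next
  case RBC
  show ?thesis
    using Theta_scaled_gram_ThC[OF r s t, where NN = "2 * real N + 1" and ?N0.0 = "2 * int N + 1"
        and J = "real j" and J' = "real l" and ?d1.0 = "int j - int l" and ?d2.0 = "int j + int l"] RBC N j l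
    by (simp add: Mfun_eq_Theta_scaled mconst_def theta_diag_def Let_def abs_less_iff)
next
  case RD
  show ?thesis
    using Theta_scaled_gram_ThD[OF r s t, where NN = "2 * (real N - 1)" and ?N0.0 = "2 * int N - 2"
        and J = "real j - 1" and J' = "real l - 1" and ?d1.0 = "int j - int l" and ?d2.0 = "int j + int l - 2"] RD N j l
    by (simp add: Mfun_eq_Theta_scaled mconst_def theta_diag_def Let_def abs_less_iff)
qed

lemma continuous_on_Mfun:
  assumes "N \<ge> 1" "R = RD \<Longrightarrow> N \<ge> 2" "r > 0" "t > 0"
  shows "continuous_on {c..d} (\<lambda>x. Mfun R N r j x t)"
  unfolding Mfun_eq_Theta_scaled
  using continuous_on_Theta_scaled[of r t "calN R N" c d "sharp R" "Jfun R j"] calN_nonzero[OF assms(1,2)] assms(3,4)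
  by simp

lemma Mfun_set_gram:
  assumes N: "N \<ge> 1" "R = RD \<Longrightarrow> N \<ge> 2" and r: "r > 0" and s: "s > 0" and t: "t > 0"
    and j: "1 \<le> j" "j \<le> N" and l: "1 \<le> l" "l \<le> N"
  shows "set_integrable lborel (if R = RA then {0..<2 * pi * r} else {0..pi * r})
           (\<lambda>y. cnj (Mfun R N r j y s) * Mfun R N r l y t)"
    and "(LINT y : (if R = RA then {0..<2 * pi * r} else {0..pi * r}) | lborel. cnj (Mfun R N r j y s) * Mfun R N r l y t)
       = (if j = l then mconst R N r j (s + t) else 0)"
proof -
  define S where "S = (if R = RA then {0..<2 * pi * r} else {0..pi * r})"
  define L where "L = (if R = RA then 2 * pi * r else pi * r)"
  define f where "f y = cnj (Mfun R N r j y s) * Mfun R N r l y t" for y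
  have int_L: "set_integrable lborel {0..L} f"
    unfolding f_def
    by (intro borel_integrable_atLeastAtMost' continuous_intros continuous_on_Mfun N r s t)
  then have int_S: "set_integrable lborel S f"
    by (rule set_integrable_subset) (auto simp: S_def L_def)
  then show "set_integrable lborel (if R = RA then {0..<2 * pi * r} else {0..pi * r})
      (\<lambda>y. cnj (Mfun R N r j y s) * Mfun R N r l y t)"
    unfolding S_def f_def .
  have "AE y in lborel. (y \<in> S) = (y \<in> {0..L})"
    using AE_lborel_singleton[of L] by eventually_elim (auto simp: S_def L_def)
  then have "(LINT y : S | lborel. f y) = (LINT y : {0..L} | lborel. f y)"
    by (intro set_integral_cong_set)
       (use int_L int_S in \<open>auto simp: set_integrable_def set_borel_measurable_def\<close>)
  also have "\<dots> = integral {0..L} f"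
    by (rule set_borel_integral_eq_integral(2)[OF int_L])
  also have "\<dots> = (if j = l then mconst R N r j (s + t) else 0)"
    unfolding f_def L_def by (rule Mfun_gram[OF N r s t j l])
  finally show "(LINT y : (if R = RA then {0..<2 * pi * r} else {0..pi * r}) | lborel.
      cnj (Mfun R N r j y s) * Mfun R N r l y t) = (if j = l then mconst R N r j (s + t) else 0)"
    unfolding f_def S_def .
qed

lemma weyl_A_eq_chamber:
  assumes "N \<ge> 1"
  shows "weyl_A N r = chamber N {0..<2 * pi * r}"
proof (intro equalityI subsetI)
  fix x assume "x \<in> weyl_A N r"
  then have "0 \<le> x 0" "\<And>k. Suc k < N \<Longrightarrow> x k < x (Suc k)" "x (N - 1) < 2 * pi * r"
    by (auto simp: weyl_A_def)
  then show "x \<in> chamber N {0..<2 * pi * r}"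
    using increasing_chain_bounds[of N x] by (force simp: chamber_def)
qed (use assms in \<open>auto simp: chamber_def weyl_A_def\<close>)

lemma weyl_half_eq_chamber:
  assumes "N \<ge> 1"
  shows "weyl_half N r = chamber N {0..pi * r}"
proof (intro equalityI subsetI)
  fix x assume "x \<in> weyl_half N r"
  then have "0 \<le> x 0" "\<And>k. Suc k < N \<Longrightarrow> x k < x (Suc k)" "x (N - 1) \<le> pi * r"
    by (auto simp: weyl_half_def)
  then show "x \<in> chamber N {0..pi * r}"
    using increasing_chain_bounds[of N x] by (force simp: chamber_def)
qed (use assms in \<open>auto simp: chamber_def weyl_half_def\<close>)

lemma qdens_eq_slater_det:
  "qdens R N r ts t x = slater_det N (\<lambda>j y. cnj (Mfun R N r (Suc j) y (ts - t))) x
     * slater_det N (\<lambda>j y. Mfun R N r (Suc j) y t) x"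
  unfolding qdens_def slater_det_def
  using det_mat_swap[of N "\<lambda>j k. cnj (Mfun R N r (Suc j) (x k) (ts - t))"]
    det_mat_swap[of N "\<lambda>j k. Mfun R N r (Suc j) (x k) t"]
  by simp

theorem lemma3p2:
  fixes R :: rtype and N :: nat and r ts t :: real
  assumes "N \<ge> 1" and "R = RD \<Longrightarrow> N \<ge> 2"
    and "r > 0" and "0 < ts" and "0 < t" and "t < ts"
  shows "(LINT x : (if R = RA then weyl_A N r else weyl_half N r) | PiM {..<N} (\<lambda>_. lborel).
            qdens R N r ts t x)
         = (\<Prod>n = 1..N. mconst R N r n ts)"
proof -
  define S where "S = (if R = RA then {0..<2 * pi * r} else {0..pi * r})"
  have "ts - t > 0"
    using assms by simp
  note gram = Mfun_set_gram[where R = R, OF assms(1-3) this assms(5), folded S_def]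
  have "(if R = RA then weyl_A N r else weyl_half N r) = chamber N S"
    using assms(1) by (simp add: S_def weyl_A_eq_chamber weyl_half_eq_chamber)
  then have "(LINT x : (if R = RA then weyl_A N r else weyl_half N r) | lborelN N. qdens R N r ts t x)
      = (LINT x : chamber N S | lborelN N. slater_det N (\<lambda>j y. cnj (Mfun R N r (Suc j) y (ts - t))) x
           * slater_det N (\<lambda>j y. Mfun R N r (Suc j) y t) x)"
    by (simp add: qdens_eq_slater_det)
  also have "\<dots> = det (mat N N (\<lambda>(a, b). LINT y : S | lborel. cnj (Mfun R N r (Suc a) y (ts - t)) * Mfun R N r (Suc b) y t))"
  proof (rule andreief_identity)
    show "S \<in> sets borel"
      by (simp add: S_def)
    show "set_integrable lborel S (\<lambda>y. cnj (Mfun R N r (Suc a) y (ts - t)) * Mfun R N r (Suc b) y t)"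
      if "a < N" "b < N" for a b
      using that by (intro gram(1)) auto
  qed
  also have "\<dots> = (\<Prod>a<N. mconst R N r (Suc a) ts)"
    using gram(2) by (subst det_diagonal_mat) auto
  also have "\<dots> = (\<Prod>n = 1..N. mconst R N r n ts)"
    by (simp add: prod.atLeast1_atMost_eq)
  finally show ?thesis .
qed

end
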